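(* In the QiSVD setup, assume (E1) and (E2) hold, and put $\beta=\omega/(4k+3)$. Then $\sigma_k>0$, so that $\hat U=SV\Sigma^{-1}$ is well defined, and $$\|\hat U^T\hat U-I\|\le\|\hat U^T\hat U-I\|_F\le\beta,\qquad \|\hat U^T\hat U\|\le 1+\beta,\qquad \|\hat U\|\le\sqrt{1+\beta},\qquad \|\hat U\|_F\le\sqrt{k(1+\beta)},$$ where $I$ is the $k\times k$ identity matrix.
   Context: QiSVD setup. Let $A\in\mathbb{R}^{m\times n}$ be a nonzero matrix of rank $r$. For a nonzero matrix $B$, $\sigma_{\min}(B)$ denotes its smallest nonzero singular value, and $\kappa=\|A\|/\sigma_{\min}(A)$, where $\|\cdot\|$ is the spectral norm and $\|\cdot\|_F$ the Frobenius norm. Let $k$ be an integer with $1\le k\le r$, and let $\epsilon,\delta\in(0,1)$. Put $$\omega=\frac{\|A\|^2\epsilon^2}{196(\|A\|_F\kappa+\|A\|)^2},$$ fix $\theta\in\Big(0,\frac{\omega\|A\|^2}{(4k+3+2\omega)\kappa^2\|A\|_F^2}\Big]$, and let $p=\lceil 1/(\theta^2\delta)\rceil$. Sample column indices $j_1,\dots,j_p$ i.i.d. from $[n]$ with $\Pr(j)=P_j=\|A_{:,j}\|^2/\|A\|_F^2$. Let $S\in\mathbb{R}^{m\times p}$ have columns $S_{:,t}=A_{:,j_t}/\sqrt{pP_{j_t}}$. Then sample row indices $i_1,\dots,i_p$ i.i.d. from $[m]$ with $\Pr(i)=P'_i=\|S_{i,:}\|^2/\|S\|_F^2$. Let $W\in\mathbb{R}^{p\times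 p}$ have rows $W_{t,:}=S_{i_t,:}/\sqrt{pP'_{i_t}}$. Let $\sigma_1\ge\dots\ge\sigma_k$ be the $k$ largest singular values of $W$, and let $v_1,\dots,v_k$ be corresponding orthonormal right singular vectors. Set $V=(v_1,\dots,v_k)\in\mathbb{R}^{p\times k}$, $\Sigma=\mathrm{diag}(\sigma_1,\dots,\sigma_k)$, and, when $\sigma_k>0$, $$\hat U=SV\Sigma^{-1}\in\mathbb{R}^{m\times k}.$$ The events used are - (E1): $\|AA^T-SS^T\|_F\le\theta\|A\|_F^2$; - (E2): $\|S^TS-W^TW\|_F\le\theta\|S\|_F^2$. By the column/row sampling lemmas and the choice of $p$, each of these events holds with probability at least $1-\delta$. *)

theory Defs
  imports Complex_Main "Jordan_Normal_Form.Jordan_Normal_Form" "Jordan_Normal_Form.DL_Rank"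
begin

definition vec_norm :: "real vec \<Rightarrow> real" where
  "vec_norm v = sqrt (\<Sum>i<dim_vec v. (v $ i)^2)"

definition spec_norm :: "real mat \<Rightarrow> real" where
  "spec_norm A = Sup {vec_norm (A *\<^sub>v x) | x. x \<in> carrier_vec (dim_col A) \<and> vec_norm x = 1}"

definition frob_norm :: "real mat \<Rightarrow> real" where
  "frob_norm A = sqrt (\<Sum>i<dim_row A. \<Sum>j<dim_col A. (A $$ (i,j))^2)"

definition sing_vals :: "real mat \<Rightarrow> real set" where
  "sing_vals A = {s. s \<ge> 0 \<and> eigenvalue (transpose_mat A * A) (s^2)}"

definition sigma_min :: "real mat \<Rightarrow> real" where
  "sigma_min A = Min {s \<in> sing_vals A. s > 0}"

definition cond_num :: "real mat \<Rightarrow> real" where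
  "cond_num A = spec_norm A / sigma_min A"

definition col_prob :: "real mat \<Rightarrow> nat \<Rightarrow> real" where
  "col_prob A j = (\<Sum>i<dim_row A. (A $$ (i,j))^2) / (frob_norm A)^2"

definition row_prob :: "real mat \<Rightarrow> nat \<Rightarrow> real" where
  "row_prob S i = (\<Sum>t<dim_col S. (S $$ (i,t))^2) / (frob_norm S)^2"

definition sample_cols :: "real mat \<Rightarrow> nat \<Rightarrow> (nat \<Rightarrow> nat) \<Rightarrow> real mat" where
  "sample_cols A p js = mat (dim_row A) p
     (\<lambda>(a,t). A $$ (a, js t) / sqrt (real p * col_prob A (js t)))"

definition sample_rows :: "real mat \<Rightarrow> nat \<Rightarrow> (nat \<Rightarrow> nat) \<Rightarrow> real mat" where
  "sample_rows S p ix = mat p (dim_col S)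
     (\<lambda>(t,b). S $$ (ix t, b) / sqrt (real p * row_prob S (ix t)))"

end

theory Submission
  imports Defs
begin

text \<open>
  Let \<open>\<sigma>\<^sub>1 \<ge> \<sigma>\<^sub>2 \<ge> \<dots>\<close> and \<open>v\<^sub>1, v\<^sub>2, \<dots>\<close> be the singular values and right singular vectors
  of \<open>W\<close>.  Since \<open>W\<^sup>T W v\<^sub>a = \<sigma>\<^sub>a\<^sup>2 v\<^sub>a\<close>, the Gram matrix of \<open>\<^bold>U = S V \<Sigma>\<^sup>-\<^sup>1\<close> is
  \<open>I + \<Sigma>\<^sup>-\<^sup>1 V\<^sup>T (S\<^sup>T S - W\<^sup>T W) V \<Sigma>\<^sup>-\<^sup>1\<close>, hence
  \<open>\<parallel>\<^bold>U\<^sup>T \<^bold>U - I\<parallel>\<^sub>F \<le> \<parallel>S\<^sup>T S - W\<^sup>T W\<parallel>\<^sub>F / \<sigma>\<^sub>k\<^sup>2 \<le> \<theta> \<parallel>A\<parallel>\<^sub>F\<^sup>2 / \<sigma>\<^sub>k\<^sup>2\<close> by (E2) and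
  \<open>\<parallel>S\<parallel>\<^sub>F \<le> \<parallel>A\<parallel>\<^sub>F\<close>.

  For a lower bound on \<open>\<sigma>\<^sub>k\<close>, let the columns of \<open>E\<close> be \<open>k\<close> orthonormal eigenvectors of
  \<open>A A\<^sup>T\<close> with positive eigenvalues; they exist because \<open>k \<le> rank A\<close>, and each eigenvalue is at
  least \<open>\<sigma>\<^sub>m\<^sub>i\<^sub>n(A)\<^sup>2\<close>, so \<open>|A\<^sup>T E c|\<^sup>2 \<ge> \<sigma>\<^sub>m\<^sub>i\<^sub>n(A)\<^sup>2 |c|\<^sup>2\<close>.  By (E1) this survives for \<open>S\<^sup>T\<close>
  with \<open>\<sigma>\<^sub>m\<^sub>i\<^sub>n(A)\<^sup>2 - \<theta> \<parallel>A\<parallel>\<^sub>F\<^sup>2\<close>.  Choosing \<open>c \<noteq> 0\<close> with \<open>x = S\<^sup>T E c\<close> orthogonal to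
  \<open>v\<^sub>1, \<dots>, v\<^sub>k\<^sub>-\<^sub>1\<close> (a min-max argument), Cauchy--Schwarz and (E2) give
  \<open>(\<sigma>\<^sub>m\<^sub>i\<^sub>n(A)\<^sup>2 - 2 \<theta> \<parallel>A\<parallel>\<^sub>F\<^sup>2) |x|\<^sup>2 \<le> |W x|\<^sup>2 \<le> \<sigma>\<^sub>k\<^sup>2 |x|\<^sup>2\<close>.  The choice of \<open>\<theta>\<close> makes
  \<open>\<theta> \<parallel>A\<parallel>\<^sub>F\<^sup>2 / (\<sigma>\<^sub>m\<^sub>i\<^sub>n(A)\<^sup>2 - 2 \<theta> \<parallel>A\<parallel>\<^sub>F\<^sup>2) \<le> \<beta>\<close>; the remaining bounds hold for every matrix
  whose Gram matrix is within \<open>\<beta>\<close> of \<open>I\<close> in Frobenius norm.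
\<close>

declare col_mult[simp del]

section \<open>Euclidean norm of vectors\<close>

lemma Cauchy_Schwarz_sum:
  fixes a b :: "'i \<Rightarrow> real"
  shows "(\<Sum>i\<in>I. a i * b i)^2 \<le> (\<Sum>i\<in>I. (a i)^2) * (\<Sum>i\<in>I. (b i)^2)"
proof (cases "(\<Sum>i\<in>I. (b i)^2) = 0")
  case True
  then have "\<forall>i\<in>I. b i = 0" if "finite I"
    using that by (subst (asm) sum_nonneg_eq_0_iff) auto
  then show ?thesis using True by (cases "finite I") auto
next
  case False
  define B where "B = (\<Sum>i\<in>I. (b i)^2)"
  define C where "C = (\<Sum>i\<in>I. a i * b i)"
  define r where "r = C / B"
  have B: "B > 0" using False unfolding B_def by (simp add: less_le sum_nonneg)
  have "0 \<le> (\<Sum>i\<in>I. (a i - r * b i)^2)" by (simp add: sum_nonneg)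
  also have "\<dots> = (\<Sum>i\<in>I. (a i)^2 - 2 * r * (a i * b i) + r^2 * (b i)^2)"
    by (rule sum.cong) (simp_all add: power2_eq_square algebra_simps)
  also have "\<dots> = (\<Sum>i\<in>I. (a i)^2) - 2 * r * C + r^2 * B"
    by (simp add: sum.distrib sum_subtractf sum_distrib_left B_def C_def)
  also have "\<dots> = (\<Sum>i\<in>I. (a i)^2) - C^2 / B"
    using B by (simp add: r_def power2_eq_square)
  finally have "C^2 / B \<le> (\<Sum>i\<in>I. (a i)^2)" by simp
  then show ?thesis using B unfolding B_def C_def by (simp add: pos_divide_le_eq)
qed

lemma scalar_prod_self: "v \<bullet> v = (\<Sum>i<dim_vec v. (v $ i)^2)" for v :: "real vec"
  by (simp add: scalar_prod_def power2_eq_square atLeast0LessThan)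

lemma scalar_prod_self_nonneg: "0 \<le> v \<bullet> v" for v :: "real vec"
  unfolding scalar_prod_self by (rule sum_nonneg) simp

lemma scalar_prod_self_eq_0_iff:
  fixes v :: "real vec"
  assumes "v \<in> carrier_vec n"
  shows "v \<bullet> v = 0 \<longleftrightarrow> v = 0\<^sub>v n"
proof
  assume "v \<bullet> v = 0"
  then have "\<forall>i<dim_vec v. (v $ i)^2 = 0"
    unfolding scalar_prod_self by (subst (asm) sum_nonneg_eq_0_iff) auto
  then show "v = 0\<^sub>v n" using assms by (auto intro!: eq_vecI)
qed simp

lemma scalar_prod_self_pos: "v \<in> carrier_vec n \<Longrightarrow> v \<noteq> 0\<^sub>v n \<Longrightarrow> 0 < v \<bullet> v" for v :: "real vec"
  using scalar_prod_self_eq_0_iff scalar_prod_self_nonneg by (simp add: less_le)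

lemma vec_norm_eq_sqrt: "vec_norm v = sqrt (v \<bullet> v)"
  unfolding vec_norm_def scalar_prod_self ..

lemma vec_norm_nonneg: "0 \<le> vec_norm v"
  by (simp add: vec_norm_eq_sqrt scalar_prod_self_nonneg)

lemma vec_norm_sq: "(vec_norm v)^2 = v \<bullet> v"
  by (simp add: vec_norm_eq_sqrt scalar_prod_self_nonneg)

lemma vec_norm_smult: "vec_norm (a \<cdot>\<^sub>v v) = \<bar>a\<bar> * vec_norm v"
proof -
  have "(a \<cdot>\<^sub>v v) \<bullet> (a \<cdot>\<^sub>v v) = a^2 * (v \<bullet> v)" by (simp add: power2_eq_square)
  then show ?thesis by (simp add: vec_norm_eq_sqrt real_sqrt_mult)
qed

lemma vec_norm_pos: "v \<in> carrier_vec n \<Longrightarrow> v \<noteq> 0\<^sub>v n \<Longrightarrow> 0 < vec_norm v"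
  by (simp add: vec_norm_eq_sqrt scalar_prod_self_pos)

lemma vec_norm_unit_vec: "j < n \<Longrightarrow> vec_norm (unit_vec n j) = 1"
  by (simp add: vec_norm_eq_sqrt)

lemma scalar_prod_sq_le:
  fixes v w :: "real vec"
  assumes "v \<in> carrier_vec n" "w \<in> carrier_vec n"
  shows "(v \<bullet> w)^2 \<le> (v \<bullet> v) * (w \<bullet> w)"
  using Cauchy_Schwarz_sum[of "\<lambda>i. v $ i" "\<lambda>i. w $ i" "{..<n}"] assms
  by (simp add: scalar_prod_def atLeast0LessThan power2_eq_square)

lemma abs_scalar_prod_le:
  fixes v w :: "real vec"
  assumes "v \<in> carrier_vec n" "w \<in> carrier_vec n"
  shows "\<bar>v \<bullet> w\<bar> \<le> vec_norm v * vec_norm w"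
  using real_sqrt_le_mono[OF scalar_prod_sq_le[OF assms]]
  by (simp add: vec_norm_eq_sqrt real_sqrt_mult)

lemma scalar_prod_add_self:
  fixes v w :: "real vec"
  assumes "v \<in> carrier_vec n" "w \<in> carrier_vec n"
  shows "(v + w) \<bullet> (v + w) = v \<bullet> v + 2 * (v \<bullet> w) + w \<bullet> w"
proof -
  have "(v + w) \<bullet> (v + w) = (\<Sum>i\<in>{0..<n}. v$i * v$i + 2 * (v$i * w$i) + w$i * w$i)"
    using assms by (auto simp: scalar_prod_def algebra_simps intro: sum.cong)
  also have "\<dots> = v \<bullet> v + 2 * (v \<bullet> w) + w \<bullet> w"
    using assms by (simp add: scalar_prod_def sum.distrib sum_distrib_left)
  finally show ?thesis .
qed

lemma vec_norm_add_le:
  fixes v w :: "real vec"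
  assumes "v \<in> carrier_vec n" "w \<in> carrier_vec n"
  shows "vec_norm (v + w) \<le> vec_norm v + vec_norm w"
proof -
  have "(vec_norm (v + w))^2 = v \<bullet> v + 2 * (v \<bullet> w) + w \<bullet> w"
    unfolding vec_norm_sq by (rule scalar_prod_add_self[OF assms])
  also have "\<dots> \<le> (vec_norm v)^2 + 2 * (vec_norm v * vec_norm w) + (vec_norm w)^2"
    using abs_scalar_prod_le[OF assms] unfolding vec_norm_sq by linarith
  also have "\<dots> = (vec_norm v + vec_norm w)^2" by (simp add: power2_eq_square algebra_simps)
  finally show ?thesis
    using power2_le_imp_le add_nonneg_nonneg vec_norm_nonneg by blast
qed

lemma scalar_prod_mult_mat_vec:
  fixes A :: "real mat"
  assumes "A \<in> carrier_mat r c" "x \<in> carrier_vec c" "y \<in> carrier_vec c"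
  shows "(A *\<^sub>v x) \<bullet> (A *\<^sub>v y) = x \<bullet> ((transpose_mat A * A) *\<^sub>v y)"
proof -
  have "(A *\<^sub>v x) \<bullet> (A *\<^sub>v y) = (transpose_mat A *\<^sub>v (A *\<^sub>v y)) \<bullet> x"
    using assms transpose_vec_mult_scalar[of A r c x "A *\<^sub>v y"] comm_scalar_prod[of "A *\<^sub>v x" r]
    by simp
  also have "\<dots> = x \<bullet> ((transpose_mat A * A) *\<^sub>v y)"
    using assms comm_scalar_prod[of x c] by simp
  finally show ?thesis .
qed

lemma orthonormal_cols_preserve_scalar_prod:
  fixes U :: "real mat"
  assumes "U \<in> carrier_mat r c" "transpose_mat U * U = 1\<^sub>m c" "x \<in> carrier_vec c" "y \<in> carrier_vec c"
  shows "(U *\<^sub>v x) \<bullet> (U *\<^sub>v y) = x \<bullet> y"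
  using assms by (simp add: scalar_prod_mult_mat_vec[of _ r c])

lemma orthogonal_mat_transpose:
  fixes V :: "real mat"
  assumes "V \<in> carrier_mat n n" "transpose_mat V * V = 1\<^sub>m n"
  shows "V * transpose_mat V = 1\<^sub>m n"
  using mat_mult_left_right_inverse[of "transpose_mat V" n V] assms by simp

section \<open>Frobenius and spectral norms\<close>

lemma frob_norm_sq: "(frob_norm A)^2 = (\<Sum>i<dim_row A. \<Sum>j<dim_col A. (A $$ (i,j))^2)"
  unfolding frob_norm_def by (simp add: sum_nonneg)

lemma frob_norm_nonneg: "0 \<le> frob_norm A"
  unfolding frob_norm_def by (simp add: sum_nonneg)

lemma frob_norm_sq_rows:
  "M \<in> carrier_mat r c \<Longrightarrow> (frob_norm M)^2 = (\<Sum>i<r. row M i \<bullet> row M i)"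
  by (simp add: frob_norm_sq scalar_prod_self)

lemma frob_norm_sq_cols:
  "M \<in> carrier_mat r c \<Longrightarrow> (frob_norm M)^2 = (\<Sum>j<c. col M j \<bullet> col M j)"
  by (simp add: frob_norm_sq scalar_prod_self sum.swap[of _ "{..<c}"])

lemma frob_norm_transpose: "frob_norm (transpose_mat M) = frob_norm M"
  unfolding frob_norm_def by (simp add: sum.swap[of _ "{..<dim_col M}"])

lemma entry_sq_le_frob_norm_sq:
  assumes "M \<in> carrier_mat r c" "i < r" "j < c"
  shows "(M $$ (i,j))^2 \<le> (frob_norm M)^2"
proof -
  have "(M $$ (i,j))^2 \<le> (\<Sum>b<c. (M $$ (i,b))^2)"
    using assms by (intro member_le_sum) auto
  also have "\<dots> \<le> (\<Sum>a<r. \<Sum>b<c. (M $$ (a,b))^2)"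
    using assms by (intro member_le_sum[of i "{..<r}" "\<lambda>a. \<Sum>b<c. (M $$ (a,b))^2"])
      (auto intro!: sum_nonneg)
  finally show ?thesis using assms by (simp add: frob_norm_sq)
qed

lemma leading_block_sum_sq_le_frob_norm_sq:
  assumes "M \<in> carrier_mat r c" "k \<le> r" "l \<le> c"
  shows "(\<Sum>a<k. \<Sum>b<l. (M $$ (a,b))^2) \<le> (frob_norm M)^2"
proof -
  have "(\<Sum>a<k. \<Sum>b<l. (M $$ (a,b))^2) \<le> (\<Sum>a<k. \<Sum>b<c. (M $$ (a,b))^2)"
    using assms by (intro sum_mono sum_mono2) auto
  also have "\<dots> \<le> (\<Sum>a<r. \<Sum>b<c. (M $$ (a,b))^2)"
    using assms by (intro sum_mono2) (auto intro: sum_nonneg)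
  finally show ?thesis using assms by (simp add: frob_norm_sq)
qed

lemma frob_norm_mult_orthonormal_cols:
  fixes U M :: "real mat"
  assumes "U \<in> carrier_mat r q" "transpose_mat U * U = 1\<^sub>m q" "M \<in> carrier_mat q c"
  shows "frob_norm (U * M) = frob_norm M"
proof -
  have "(frob_norm (U * M))^2 = (\<Sum>j<c. (U *\<^sub>v col M j) \<bullet> (U *\<^sub>v col M j))"
    using assms by (simp add: frob_norm_sq_cols[of _ r c] col_mult2)
  also have "\<dots> = (frob_norm M)^2"
    using assms by (simp add: frob_norm_sq_cols[of _ q c] orthonormal_cols_preserve_scalar_prod[of _ r q])
  finally show ?thesis by (simp add: frob_norm_nonneg power2_eq_iff_nonneg)
qed

lemma frob_norm_orthogonal_conj:
  fixes V M :: "real mat"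
  assumes V: "V \<in> carrier_mat n n" "transpose_mat V * V = 1\<^sub>m n" and M: "M \<in> carrier_mat n n"
  shows "frob_norm (transpose_mat V * (M * V)) = frob_norm M"
proof -
  have Vt: "transpose_mat (transpose_mat V) * transpose_mat V = 1\<^sub>m n"
    using orthogonal_mat_transpose[OF V] by simp
  have "frob_norm (transpose_mat V * (M * V)) = frob_norm (M * V)"
    using V M Vt by (intro frob_norm_mult_orthonormal_cols[of _ n n]) auto
  also have "\<dots> = frob_norm (transpose_mat V * transpose_mat M)"
    using V M by (metis frob_norm_transpose transpose_mult)
  also have "\<dots> = frob_norm M"
    using V M Vt by (simp add: frob_norm_mult_orthonormal_cols[of _ n n] frob_norm_transpose)
  finally show ?thesis .
qed

lemma mult_mat_vec_sq_le:
  fixes M :: "real mat"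
  assumes "M \<in> carrier_mat r c" "x \<in> carrier_vec c"
  shows "(M *\<^sub>v x) \<bullet> (M *\<^sub>v x) \<le> (frob_norm M)^2 * (x \<bullet> x)"
proof -
  have "(M *\<^sub>v x) \<bullet> (M *\<^sub>v x) = (\<Sum>i<r. (row M i \<bullet> x)^2)"
    using assms by (simp add: scalar_prod_self)
  also have "\<dots> \<le> (\<Sum>i<r. (row M i \<bullet> row M i) * (x \<bullet> x))"
    using assms by (intro sum_mono scalar_prod_sq_le[of _ c]) auto
  also have "\<dots> = (frob_norm M)^2 * (x \<bullet> x)"
    using assms by (simp add: frob_norm_sq_rows sum_distrib_right)
  finally show ?thesis .
qed

lemma vec_norm_mult_mat_vec_le_frob:
  assumes "M \<in> carrier_mat r c" "x \<in> carrier_vec c"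
  shows "vec_norm (M *\<^sub>v x) \<le> frob_norm M * vec_norm x"
  using real_sqrt_le_mono[OF mult_mat_vec_sq_le[OF assms]]
  by (simp add: vec_norm_eq_sqrt real_sqrt_mult frob_norm_nonneg)

lemma abs_quadratic_form_le:
  assumes "M \<in> carrier_mat n n" "x \<in> carrier_vec n"
  shows "\<bar>x \<bullet> (M *\<^sub>v x)\<bar> \<le> frob_norm M * (x \<bullet> x)"
proof -
  have "\<bar>x \<bullet> (M *\<^sub>v x)\<bar> \<le> vec_norm x * vec_norm (M *\<^sub>v x)"
    using assms by (intro abs_scalar_prod_le[of _ n]) auto
  also have "\<dots> \<le> vec_norm x * (frob_norm M * vec_norm x)"
    using vec_norm_mult_mat_vec_le_frob[OF assms] vec_norm_nonneg by (rule mult_left_mono)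
  also have "\<dots> = frob_norm M * (x \<bullet> x)"
    by (simp add: vec_norm_sq[symmetric] power2_eq_square)
  finally show ?thesis .
qed

lemma vec_norm_mult_mat_vec_le_spec_unit:
  assumes "M \<in> carrier_mat r c" "x \<in> carrier_vec c" "vec_norm x = 1"
  shows "vec_norm (M *\<^sub>v x) \<le> spec_norm M"
  unfolding spec_norm_def
proof (rule cSup_upper)
  show "bdd_above {vec_norm (M *\<^sub>v x) |x. x \<in> carrier_vec (dim_col M) \<and> vec_norm x = 1}"
  proof (rule bdd_aboveI)
    fix t assume "t \<in> {vec_norm (M *\<^sub>v x) |x. x \<in> carrier_vec (dim_col M) \<and> vec_norm x = 1}"
    then obtain y where "t = vec_norm (M *\<^sub>v y)" "y \<in> carrier_vec c" "vec_norm y = 1"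
      using assms(1) by auto
    then show "t \<le> frob_norm M" using vec_norm_mult_mat_vec_le_frob[OF assms(1), of y] by simp
  qed
qed (use assms in auto)

lemma spec_norm_le:
  assumes "M \<in> carrier_mat r c" "0 < c"
    and "\<And>x. x \<in> carrier_vec c \<Longrightarrow> vec_norm x = 1 \<Longrightarrow> vec_norm (M *\<^sub>v x) \<le> b"
  shows "spec_norm M \<le> b"
  unfolding spec_norm_def
  using assms vec_norm_unit_vec[OF assms(2)]
  by (intro cSup_least) (auto intro!: exI[of _ "unit_vec c 0"])

lemma spec_norm_nonneg: "M \<in> carrier_mat r c \<Longrightarrow> 0 < c \<Longrightarrow> 0 \<le> spec_norm M"
  using vec_norm_mult_mat_vec_le_spec_unit[of M r c "unit_vec c 0"] vec_norm_nonneg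
    vec_norm_unit_vec order_trans by fastforce

lemma vec_norm_mult_mat_vec_le_spec:
  assumes M: "M \<in> carrier_mat r c" and x: "x \<in> carrier_vec c" and c: "0 < c"
  shows "vec_norm (M *\<^sub>v x) \<le> spec_norm M * vec_norm x"
proof (cases "x = 0\<^sub>v c")
  case True
  have "M *\<^sub>v x = 0\<^sub>v r" using M True by (auto intro!: eq_vecI)
  then show ?thesis
    using mult_nonneg_nonneg[OF spec_norm_nonneg[OF M c] vec_norm_nonneg] by (simp add: vec_norm_eq_sqrt)
next
  case False
  define a where "a = vec_norm x"
  have a: "0 < a" unfolding a_def using vec_norm_pos[OF x False] .
  have "vec_norm (M *\<^sub>v ((1/a) \<cdot>\<^sub>v x)) \<le> spec_norm M"
    using M x a by (intro vec_norm_mult_mat_vec_le_spec_unit) (auto simp: vec_norm_smult a_def)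
  then have "(1/a) * vec_norm (M *\<^sub>v x) \<le> spec_norm M"
    using M x a by (simp add: mult_mat_vec vec_norm_smult)
  then show ?thesis using a by (simp add: a_def field_simps)
qed

lemma spec_norm_le_frob_norm:
  assumes "M \<in> carrier_mat r c" "0 < c"
  shows "spec_norm M \<le> frob_norm M"
proof (rule spec_norm_le[OF assms])
  fix x :: "real vec" assume "x \<in> carrier_vec c" "vec_norm x = 1"
  then show "vec_norm (M *\<^sub>v x) \<le> frob_norm M"
    using vec_norm_mult_mat_vec_le_frob[OF assms(1)] by fastforce
qed

lemma spec_norm_pos:
  fixes M :: "real mat"
  assumes "M \<in> carrier_mat r c" "i < r" "j < c" "M $$ (i,j) \<noteq> 0"
  shows "0 < spec_norm M"
proof -
  have "M *\<^sub>v unit_vec c j \<noteq> 0\<^sub>v r"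
  proof
    assume "M *\<^sub>v unit_vec c j = 0\<^sub>v r"
    then have "(M *\<^sub>v unit_vec c j) $ i = 0" using assms by simp
    then show False using assms by simp
  qed
  then have "0 < vec_norm (M *\<^sub>v unit_vec c j)"
    using assms by (intro vec_norm_pos[of _ r]) auto
  also have "\<dots> \<le> spec_norm M"
    using assms by (intro vec_norm_mult_mat_vec_le_spec_unit) (auto simp: vec_norm_unit_vec)
  finally show ?thesis .
qed

lemma norms_pos_if_nonzero:
  fixes A :: "real mat"
  assumes A: "A \<in> carrier_mat m n" and nz: "A \<noteq> 0\<^sub>m m n"
  shows "0 < spec_norm A" "0 < frob_norm A"
proof -
  obtain i j where ij: "i < m" "j < n" "A $$ (i,j) \<noteq> 0"
    using nz A by (metis eq_matI carrier_matD index_zero_mat(1,2,3))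
  show "0 < spec_norm A" by (rule spec_norm_pos[OF A ij])
  have "0 < (frob_norm A)^2"
    using entry_sq_le_frob_norm_sq[OF A ij(1,2)] ij(3) zero_less_power2[of "A $$ (i,j)"] by linarith
  then show "0 < frob_norm A" using frob_norm_nonneg[of A] by (auto simp: less_le)
qed

section \<open>Matrices with almost orthonormal columns\<close>

context
  fixes U :: "real mat" and m k :: nat
  assumes U: "U \<in> carrier_mat m k" and k: "0 < k"
begin

lemma spec_norm_gram_le: "spec_norm (transpose_mat U * U) \<le> 1 + spec_norm (transpose_mat U * U - 1\<^sub>m k)"
proof (rule spec_norm_le[OF _ k])
  show "transpose_mat U * U \<in> carrier_mat k k" using U by simp
  fix x :: "real vec" assume x: "x \<in> carrier_vec k" "vec_norm x = 1"
  define G where "G = transpose_mat U * U - 1\<^sub>m k"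
  have G: "G \<in> carrier_mat k k" using U unfolding G_def by (simp add: minus_carrier_mat)
  have "(transpose_mat U * U) *\<^sub>v x = G *\<^sub>v x + x"
    using U x unfolding G_def by (auto intro!: eq_vecI simp: minus_mult_distrib_mat_vec[of _ k k])
  then have "vec_norm ((transpose_mat U * U) *\<^sub>v x) \<le> vec_norm (G *\<^sub>v x) + vec_norm x"
    using vec_norm_add_le[of "G *\<^sub>v x" k x] G x by simp
  also have "vec_norm (G *\<^sub>v x) \<le> spec_norm G * vec_norm x"
    by (rule vec_norm_mult_mat_vec_le_spec[OF G x(1) k])
  finally show "vec_norm ((transpose_mat U * U) *\<^sub>v x) \<le> 1 + spec_norm G" using x(2) by simp
qed

lemma spec_norm_le_sqrt_gram: "spec_norm U \<le> sqrt (spec_norm (transpose_mat U * U))"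
proof (rule spec_norm_le[OF U k])
  fix x :: "real vec" assume x: "x \<in> carrier_vec k" "vec_norm x = 1"
  have P: "transpose_mat U * U \<in> carrier_mat k k" using U by simp
  have "(vec_norm (U *\<^sub>v x))^2 = x \<bullet> ((transpose_mat U * U) *\<^sub>v x)"
    unfolding vec_norm_sq by (rule scalar_prod_mult_mat_vec[OF U x(1) x(1)])
  also have "\<dots> \<le> vec_norm x * vec_norm ((transpose_mat U * U) *\<^sub>v x)"
    using abs_scalar_prod_le[of x k "(transpose_mat U * U) *\<^sub>v x"] P x by simp
  also have "\<dots> \<le> spec_norm (transpose_mat U * U)"
    using vec_norm_mult_mat_vec_le_spec[OF P x(1) k] x(2) by simp
  finally show "vec_norm (U *\<^sub>v x) \<le> sqrt (spec_norm (transpose_mat U * U))"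
    using real_le_rsqrt by blast
qed

lemma frob_norm_sq_le_gram: "(frob_norm U)^2 \<le> real k * (1 + frob_norm (transpose_mat U * U - 1\<^sub>m k))"
proof -
  define G where "G = transpose_mat U * U - 1\<^sub>m k"
  have G: "G \<in> carrier_mat k k" using U unfolding G_def by (simp add: minus_carrier_mat)
  have "col U j \<bullet> col U j \<le> 1 + frob_norm G" if j: "j < k" for j
  proof -
    have "\<bar>G $$ (j,j)\<bar> \<le> frob_norm G"
      using power2_le_imp_le[of "\<bar>G $$ (j,j)\<bar>" "frob_norm G"] entry_sq_le_frob_norm_sq[OF G j j]
        frob_norm_nonneg by simp
    moreover have "G $$ (j,j) = col U j \<bullet> col U j - 1" using U j unfolding G_def by simp
    ultimately show ?thesis by simp
  qed
  then have "(\<Sum>j<k. col U j \<bullet> col U j) \<le> (\<Sum>j<k. 1 + frob_norm G)" by (intro sum_mono) auto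
  then show ?thesis using U by (simp add: frob_norm_sq_cols G_def)
qed

lemma almost_orthonormal_cols_bounds:
  assumes beta: "frob_norm (transpose_mat U * U - 1\<^sub>m k) \<le> beta"
  shows "spec_norm (transpose_mat U * U - 1\<^sub>m k) \<le> frob_norm (transpose_mat U * U - 1\<^sub>m k)"
    and "spec_norm (transpose_mat U * U) \<le> 1 + beta"
    and "spec_norm U \<le> sqrt (1 + beta)"
    and "frob_norm U \<le> sqrt (real k * (1 + beta))"
proof -
  have G: "transpose_mat U * U - 1\<^sub>m k \<in> carrier_mat k k" using U by (simp add: minus_carrier_mat)
  show spec_frob: "spec_norm (transpose_mat U * U - 1\<^sub>m k) \<le> frob_norm (transpose_mat U * U - 1\<^sub>m k)"
    by (rule spec_norm_le_frob_norm[OF G k])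
  show gram: "spec_norm (transpose_mat U * U) \<le> 1 + beta"
    using spec_norm_gram_le spec_frob beta by linarith
  show "spec_norm U \<le> sqrt (1 + beta)"
    using spec_norm_le_sqrt_gram real_sqrt_le_mono[OF gram] by linarith
  have "(frob_norm U)^2 \<le> real k * (1 + beta)"
    using frob_norm_sq_le_gram mult_left_mono[OF add_left_mono[OF beta, of 1] of_nat_0_le_iff[of k]] by linarith
  then show "frob_norm U \<le> sqrt (real k * (1 + beta))"
    using real_le_rsqrt by blast
qed

end

section \<open>Orthonormal eigenvectors of \<open>A A\<^sup>T\<close>\<close>

text \<open>The eigenvectors are obtained one at a time by maximising \<open>|A\<^sup>T y|\<^sup>2\<close> on the unit sphere
  of the orthogonal complement of those already found; existence of the maximum is proved by
  extracting coordinatewise convergent subsequences.\<close>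

lemma convergent_subseq_bounded_coords:
  fixes x :: "nat \<Rightarrow> nat \<Rightarrow> real"
  assumes "\<And>i l. l < m \<Longrightarrow> \<bar>x i l\<bar> \<le> C"
  shows "\<exists>r L. strict_mono r \<and> (\<forall>l<m. (\<lambda>i. x (r i) l) \<longlonglongrightarrow> L l)"
  using assms
proof (induction m)
  case 0
  then show ?case by (auto intro!: exI[of _ id] simp: strict_mono_def)
next
  case (Suc m)
  then obtain r L where r: "strict_mono r" and L: "\<forall>l<m. (\<lambda>i. x (r i) l) \<longlonglongrightarrow> L l"
    by auto
  obtain r2 where r2: "strict_mono r2" and mono: "monoseq (\<lambda>i. x (r (r2 i)) m)"
    using seq_monosub[of "\<lambda>i. x (r i) m"] by auto
  have "Bseq (\<lambda>i. x (r (r2 i)) m)" using Suc.prems by (intro BseqI'[of _ C]) auto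
  then obtain a where a: "(\<lambda>i. x (r (r2 i)) m) \<longlonglongrightarrow> a"
    using mono Bseq_monoseq_convergent convergent_def by blast
  have "(\<lambda>i. x (r (r2 i)) l) \<longlonglongrightarrow> (L(m := a)) l" if "l < Suc m" for l
  proof (cases "l = m")
    case False
    then have "l < m" using that by simp
    then have "((\<lambda>i. x (r i) l) \<circ> r2) \<longlonglongrightarrow> L l"
      using L r2 LIMSEQ_subseq_LIMSEQ by blast
    then show ?thesis using False by (simp add: comp_def)
  qed (use a in simp)
  then show ?case using strict_mono_o[OF r r2] unfolding comp_def by blast
qed

lemma tendsto_scalar_prod:
  fixes a b :: "nat \<Rightarrow> real vec"
  assumes "\<And>i. b i \<in> carrier_vec m" "b' \<in> carrier_vec m"
    and "\<And>l. l < m \<Longrightarrow> (\<lambda>i. a i $ l) \<longlonglongrightarrow> a' $ l"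
    and "\<And>l. l < m \<Longrightarrow> (\<lambda>i. b i $ l) \<longlonglongrightarrow> b' $ l"
  shows "(\<lambda>i. a i \<bullet> b i) \<longlonglongrightarrow> a' \<bullet> b'"
proof -
  have "a i \<bullet> b i = (\<Sum>l\<in>{0..<m}. a i $ l * b i $ l)" for i
    using assms(1)[of i] by (simp add: scalar_prod_def)
  moreover have "a' \<bullet> b' = (\<Sum>l\<in>{0..<m}. a' $ l * b' $ l)"
    using assms(2) by (simp add: scalar_prod_def)
  ultimately show ?thesis
    by (simp only:) (intro tendsto_sum tendsto_mult; use assms(3,4) in simp)
qed

lemma tendsto_mult_mat_vec:
  fixes B :: "real mat"
  assumes "B \<in> carrier_mat q m" "\<And>i. a i \<in> carrier_vec m" "a' \<in> carrier_vec m"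
    and "\<And>l. l < m \<Longrightarrow> (\<lambda>i. a i $ l) \<longlonglongrightarrow> a' $ l" "l < q"
  shows "(\<lambda>i. (B *\<^sub>v a i) $ l) \<longlonglongrightarrow> (B *\<^sub>v a') $ l"
  using tendsto_scalar_prod[of a m a' "\<lambda>_. row B l" "row B l"] assms
  by (simp add: comm_scalar_prod[of "row B l" m])

definition unit_sphere_orth :: "real mat \<Rightarrow> nat \<Rightarrow> real vec set" where
  "unit_sphere_orth E m = {y \<in> carrier_vec m. y \<bullet> y = 1 \<and> transpose_mat E *\<^sub>v y = 0\<^sub>v (dim_col E)}"

lemma unit_sphere_orth_seq_compact:
  fixes E :: "real mat" and ys :: "nat \<Rightarrow> real vec"
  assumes E: "E \<in> carrier_mat m j" and ys: "\<And>i. ys i \<in> unit_sphere_orth E m"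
  obtains r y0 where "strict_mono r" "y0 \<in> unit_sphere_orth E m"
    "\<And>l. l < m \<Longrightarrow> (\<lambda>i. ys (r i) $ l) \<longlonglongrightarrow> y0 $ l"
proof -
  have ysc: "ys i \<in> carrier_vec m" for i using ys unfolding unit_sphere_orth_def by auto
  have "\<bar>ys i $ l\<bar> \<le> 1" if "l < m" for i l
  proof -
    have "(ys i $ l)^2 \<le> (\<Sum>l'<m. (ys i $ l')^2)" using that by (intro member_le_sum) auto
    also have "\<dots> = 1" using ys[of i] ysc[of i] unfolding unit_sphere_orth_def by (simp add: scalar_prod_self)
    finally show ?thesis by (simp add: abs_square_le_1)
  qed
  then obtain r L where r: "strict_mono r" and L: "\<forall>l<m. (\<lambda>i. ys (r i) $ l) \<longlonglongrightarrow> L l"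
    using convergent_subseq_bounded_coords[of m "\<lambda>i l. ys i $ l" 1] by blast
  define y0 where "y0 = vec m L"
  have y0: "y0 \<in> carrier_vec m" unfolding y0_def by simp
  have conv: "\<And>l. l < m \<Longrightarrow> (\<lambda>i. ys (r i) $ l) \<longlonglongrightarrow> y0 $ l" using L unfolding y0_def by simp
  have "(\<lambda>i. ys (r i) \<bullet> ys (r i)) \<longlonglongrightarrow> y0 \<bullet> y0"
    by (rule tendsto_scalar_prod) (use ysc y0 conv in auto)
  moreover have "ys (r i) \<bullet> ys (r i) = 1" for i
    using ys[of "r i"] unfolding unit_sphere_orth_def by simp
  ultimately have "y0 \<bullet> y0 = 1" by (simp add: LIMSEQ_const_iff)
  moreover have "(transpose_mat E *\<^sub>v y0) $ l = 0" if l: "l < j" for l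
  proof -
    have "(\<lambda>i. (transpose_mat E *\<^sub>v ys (r i)) $ l) \<longlonglongrightarrow> (transpose_mat E *\<^sub>v y0) $ l"
      by (rule tendsto_mult_mat_vec[of _ j m]) (use E ysc y0 conv l in auto)
    moreover have "(transpose_mat E *\<^sub>v ys (r i)) $ l = 0" for i
      using ys[of "r i"] E l unfolding unit_sphere_orth_def by simp
    ultimately show ?thesis by (simp add: LIMSEQ_const_iff)
  qed
  ultimately have "y0 \<in> unit_sphere_orth E m"
    using E y0 unfolding unit_sphere_orth_def by (auto intro!: eq_vecI)
  then show ?thesis using that r conv by blast
qed

lemma quadratic_form_attains_max:
  fixes B E :: "real mat"
  assumes B: "B \<in> carrier_mat q m" and E: "E \<in> carrier_mat m j"
    and ne: "unit_sphere_orth E m \<noteq> {}"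
  obtains y0 where "y0 \<in> unit_sphere_orth E m"
    "\<And>y. y \<in> unit_sphere_orth E m \<Longrightarrow> (B *\<^sub>v y) \<bullet> (B *\<^sub>v y) \<le> (B *\<^sub>v y0) \<bullet> (B *\<^sub>v y0)"
proof -
  define K where "K = unit_sphere_orth E m"
  define f where "f y = (B *\<^sub>v y) \<bullet> (B *\<^sub>v y)" for y
  define mu where "mu = Sup (f ` K)"
  have Kc: "y \<in> carrier_vec m" and Kn: "y \<bullet> y = 1" if "y \<in> K" for y
    using that unfolding K_def unit_sphere_orth_def by auto
  have "bdd_above (f ` K)"
  proof (rule bdd_aboveI)
    fix t assume "t \<in> f ` K"
    then obtain y where "y \<in> K" "t = f y" by auto
    then show "t \<le> (frob_norm B)^2"
      using mult_mat_vec_sq_le[OF B Kc] Kn unfolding f_def by fastforce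
  qed
  then have upper: "f y \<le> mu" if "y \<in> K" for y unfolding mu_def using that by (intro cSup_upper) auto
  have "\<exists>y\<in>K. mu - 1 / real (Suc i) < f y" for i
    using less_cSupD[of "f ` K" "mu - 1 / real (Suc i)"] ne unfolding mu_def K_def by auto
  then obtain ys where ys: "\<And>i. ys i \<in> K" "\<And>i. mu - 1 / real (Suc i) < f (ys i)" by metis
  obtain r y0 where r: "strict_mono r" and y0: "y0 \<in> K"
    and conv: "\<And>l. l < m \<Longrightarrow> (\<lambda>i. ys (r i) $ l) \<longlonglongrightarrow> y0 $ l"
    using unit_sphere_orth_seq_compact[OF E, of ys] ys(1) unfolding K_def by metis
  have "(\<lambda>i. f (ys (r i))) \<longlonglongrightarrow> f y0"
    unfolding f_def using B Kc ys(1) y0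
    by (intro tendsto_scalar_prod[of _ q] tendsto_mult_mat_vec[OF B]) (auto intro: conv)
  moreover have "(\<lambda>i. mu - 1 / real (Suc (r i))) \<longlonglongrightarrow> mu - 0"
    using LIMSEQ_subseq_LIMSEQ[OF LIMSEQ_inverse_real_of_nat r]
    by (intro tendsto_diff) (auto simp: comp_def divide_inverse)
  ultimately have "mu \<le> f y0"
    using ys(2) by (intro LIMSEQ_le[of "\<lambda>i. mu - 1 / real (Suc (r i))"]) (auto intro: less_imp_le)
  then show ?thesis using that y0 upper unfolding K_def f_def by fastforce
qed

lemma quadratic_form_le_on_orth:
  fixes B E :: "real mat"
  assumes B: "B \<in> carrier_mat q m" and E: "E \<in> carrier_mat m j"
    and unit: "\<And>y. y \<in> unit_sphere_orth E m \<Longrightarrow> (B *\<^sub>v y) \<bullet> (B *\<^sub>v y) \<le> mu"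
    and z: "z \<in> carrier_vec m" "transpose_mat E *\<^sub>v z = 0\<^sub>v j"
  shows "(B *\<^sub>v z) \<bullet> (B *\<^sub>v z) \<le> mu * (z \<bullet> z)"
proof (cases "z = 0\<^sub>v m")
  case True
  then have "B *\<^sub>v z = 0\<^sub>v q" using B by (auto intro!: eq_vecI)
  then show ?thesis using True by simp
next
  case False
  define b where "b = vec_norm z"
  have b: "0 < b" unfolding b_def using vec_norm_pos[OF z(1) False] .
  have "(1/b) \<cdot>\<^sub>v z \<in> unit_sphere_orth E m"
    using b z E vec_norm_sq[of "(1/b) \<cdot>\<^sub>v z"]
    by (auto simp: unit_sphere_orth_def vec_norm_smult b_def mult_mat_vec)
  then have "(B *\<^sub>v ((1/b) \<cdot>\<^sub>v z)) \<bullet> (B *\<^sub>v ((1/b) \<cdot>\<^sub>v z)) \<le> mu" by (rule unit)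
  then have "(B *\<^sub>v z) \<bullet> (B *\<^sub>v z) / b^2 \<le> mu"
    using B z by (simp add: mult_mat_vec power2_eq_square)
  then show ?thesis
    using vec_norm_sq[of z] scalar_prod_self_pos[OF z(1) False]
    by (simp add: b_def pos_divide_le_eq mult.commute)
qed

lemma eq_0_if_linear_le_quadratic:
  fixes a b :: real
  assumes le: "\<And>t. 2 * t * b \<le> t^2 * a" and a: "0 \<le> a"
  shows "b = 0"
proof -
  define t where "t = b / (a + 1)"
  have tb: "t * (a + 1) = b" using a by (simp add: t_def)
  have "2 * t * b * (a + 1)^2 \<le> t^2 * a * (a + 1)^2" using le[of t] by (simp add: mult_right_mono)
  then have "2 * b * b * (a + 1) \<le> b * b * a"
    unfolding tb[symmetric] by (simp add: power2_eq_square algebra_simps)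
  then have "b * b * (a + 2) \<le> 0" by (simp add: algebra_simps)
  then have "b * b \<le> 0" using a by (simp add: mult_le_0_iff)
  then show ?thesis using zero_le_square[of b] by (metis mult_eq_0_iff order_antisym)
qed

lemma rayleigh_max_stationary:
  fixes B E :: "real mat"
  assumes B: "B \<in> carrier_mat q m" and E: "E \<in> carrier_mat m j"
    and max: "\<And>y. y \<in> carrier_vec m \<Longrightarrow> transpose_mat E *\<^sub>v y = 0\<^sub>v j \<Longrightarrow>
       (B *\<^sub>v y) \<bullet> (B *\<^sub>v y) \<le> mu * (y \<bullet> y)"
    and y0: "y0 \<in> carrier_vec m" "transpose_mat E *\<^sub>v y0 = 0\<^sub>v j"
      "(B *\<^sub>v y0) \<bullet> (B *\<^sub>v y0) = mu * (y0 \<bullet> y0)"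
    and u: "u \<in> carrier_vec m" "transpose_mat E *\<^sub>v u = 0\<^sub>v j"
  shows "(B *\<^sub>v u) \<bullet> (B *\<^sub>v y0) = mu * (u \<bullet> y0)"
proof -
  define c where "c = (B *\<^sub>v u) \<bullet> (B *\<^sub>v y0)"
  define d where "d = u \<bullet> y0"
  have "2 * t * (c - mu * d) \<le> t^2 * (mu * (u \<bullet> u) - (B *\<^sub>v u) \<bullet> (B *\<^sub>v u))" for t
  proof -
    define z where "z = y0 + t \<cdot>\<^sub>v u"
    have z: "z \<in> carrier_vec m" "transpose_mat E *\<^sub>v z = 0\<^sub>v j"
      using E y0 u unfolding z_def by (auto simp: mult_add_distrib_mat_vec[of _ j m] mult_mat_vec)
    have Bz: "B *\<^sub>v z = B *\<^sub>v y0 + t \<cdot>\<^sub>v (B *\<^sub>v u)"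
      using mult_add_distrib_mat_vec[OF B y0(1), of "t \<cdot>\<^sub>v u"] mult_mat_vec[OF B u(1)] u
      unfolding z_def by simp
    have "(B *\<^sub>v y0) \<bullet> (B *\<^sub>v y0) + 2 * t * c + t^2 * ((B *\<^sub>v u) \<bullet> (B *\<^sub>v u))
        = (B *\<^sub>v z) \<bullet> (B *\<^sub>v z)"
      using B y0 u unfolding Bz c_def
      by (simp add: scalar_prod_add_self[of _ q] comm_scalar_prod[of "B *\<^sub>v u" q "B *\<^sub>v y0"]
          power2_eq_square)
    also have "\<dots> \<le> mu * (z \<bullet> z)" by (rule max[OF z])
    also have "z \<bullet> z = y0 \<bullet> y0 + 2 * t * d + t^2 * (u \<bullet> u)"
      using y0 u unfolding z_def d_def
      by (simp add: scalar_prod_add_self[of _ m] comm_scalar_prod[of u m y0] power2_eq_square)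
    finally show ?thesis using y0(3) by (simp add: algebra_simps)
  qed
  moreover have "0 \<le> mu * (u \<bullet> u) - (B *\<^sub>v u) \<bullet> (B *\<^sub>v u)" using max[OF u] by simp
  ultimately have "c - mu * d = 0" by (rule eq_0_if_linear_le_quadratic)
  then show ?thesis unfolding c_def d_def by simp
qed

lemma rayleigh_maximiser_is_eigenvector:
  fixes A E :: "real mat"
  assumes A: "A \<in> carrier_mat m n" and E: "E \<in> carrier_mat m j"
    and eig: "\<And>i. i < j \<Longrightarrow> (A * transpose_mat A) *\<^sub>v col E i = lam i \<cdot>\<^sub>v col E i"
    and max: "\<And>y. y \<in> carrier_vec m \<Longrightarrow> transpose_mat E *\<^sub>v y = 0\<^sub>v j \<Longrightarrow>
       (transpose_mat A *\<^sub>v y) \<bullet> (transpose_mat A *\<^sub>v y) \<le> mu * (y \<bullet> y)"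
    and y0: "y0 \<in> carrier_vec m" "transpose_mat E *\<^sub>v y0 = 0\<^sub>v j"
      "(transpose_mat A *\<^sub>v y0) \<bullet> (transpose_mat A *\<^sub>v y0) = mu * (y0 \<bullet> y0)"
  shows "(A * transpose_mat A) *\<^sub>v y0 = mu \<cdot>\<^sub>v y0"
proof -
  define M where "M = A * transpose_mat A"
  have M: "M \<in> carrier_mat m m" using A unfolding M_def by simp
  have gram: "(transpose_mat A *\<^sub>v x) \<bullet> (transpose_mat A *\<^sub>v y) = x \<bullet> (M *\<^sub>v y)"
    if "x \<in> carrier_vec m" "y \<in> carrier_vec m" for x y
    using scalar_prod_mult_mat_vec[of "transpose_mat A" n m x y] A that unfolding M_def by simp
  have M_sym: "x \<bullet> (M *\<^sub>v y) = y \<bullet> (M *\<^sub>v x)" if "x \<in> carrier_vec m" "y \<in> carrier_vec m" for x y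
    using gram[OF that] gram[OF that(2,1)] A that comm_scalar_prod[of "transpose_mat A *\<^sub>v x" n] by simp
  text \<open>By symmetry of \<open>M\<close>, the residual \<open>w\<close> stays orthogonal to the eigenvectors in \<open>E\<close>;
    stationarity in the direction \<open>w\<close> then forces \<open>w \<bullet> w = 0\<close>.\<close>
  define w where "w = M *\<^sub>v y0 - mu \<cdot>\<^sub>v y0"
  have w: "w \<in> carrier_vec m" unfolding w_def using M y0 by simp
  have "(transpose_mat E *\<^sub>v w) $ i = 0" if i: "i < j" for i
  proof -
    have e: "col E i \<in> carrier_vec m" using E i by simp
    have e0: "col E i \<bullet> y0 = 0"
      using arg_cong[OF y0(2), of "\<lambda>v. v $ i"] E i by simp
    have "(transpose_mat E *\<^sub>v w) $ i = col E i \<bullet> (M *\<^sub>v y0) - mu * (col E i \<bullet> y0)"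
      using E i M y0 e unfolding w_def by (simp add: scalar_prod_minus_distrib[of _ m])
    also have "col E i \<bullet> (M *\<^sub>v y0) = lam i * (y0 \<bullet> col E i)"
      using M_sym[OF e y0(1)] eig[OF i] e y0 unfolding M_def by simp
    finally show ?thesis using e e0 y0 by (simp add: comm_scalar_prod[of y0 m "col E i"])
  qed
  then have "transpose_mat E *\<^sub>v w = 0\<^sub>v j" using E w by (auto intro!: eq_vecI)
  then have "(transpose_mat A *\<^sub>v w) \<bullet> (transpose_mat A *\<^sub>v y0) = mu * (w \<bullet> y0)"
    using A by (intro rayleigh_max_stationary[OF _ E max y0 w]) auto
  moreover have "w \<bullet> w = w \<bullet> (M *\<^sub>v y0) - mu * (w \<bullet> y0)"
    using w M y0 by (subst (2) w_def) (simp add: scalar_prod_minus_distrib[of _ m])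
  ultimately have "w \<bullet> w = 0" using gram[OF w y0(1)] by simp
  then have "w = 0\<^sub>v m" using scalar_prod_self_eq_0_iff[OF w] by simp
  show ?thesis unfolding M_def[symmetric]
  proof (rule eq_vecI)
    fix i assume "i < dim_vec (mu \<cdot>\<^sub>v y0)"
    then have "i < m" using y0 by simp
    then have "(M *\<^sub>v y0) $ i - mu * y0 $ i = 0"
      using arg_cong[OF \<open>w = 0\<^sub>v m\<close>, of "\<lambda>v. v $ i"] M y0 unfolding w_def by simp
    then show "(M *\<^sub>v y0) $ i = (mu \<cdot>\<^sub>v y0) $ i" using \<open>i < m\<close> y0 by simp
  qed (use M y0 in simp)
qed

lemma exists_nonzero_kernel_vec:
  fixes G :: "real mat"
  assumes G: "G \<in> carrier_mat q c" and qc: "q < c"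
  obtains v where "v \<in> carrier_vec c" "v \<noteq> 0\<^sub>v c" "G *\<^sub>v v = 0\<^sub>v q"
proof -
  define G' where
    "G' = mat\<^sub>r c c (\<lambda>i. if i = c - 1 then 0\<^sub>v c else if i < q then row G i else 0\<^sub>v c)"
  have "det G' = 0" unfolding G'_def by (rule det_row_0) (use qc G in auto)
  then obtain v where v: "v \<in> carrier_vec c" "v \<noteq> 0\<^sub>v c" "G' *\<^sub>v v = 0\<^sub>v c"
    using det_0_iff_vec_prod_zero[of G' c] unfolding G'_def by auto
  have "(G *\<^sub>v v) $ i = 0" if "i < q" for i
  proof -
    have "i \<noteq> c - 1" using that qc by simp
    then show ?thesis using arg_cong[OF v(3), of "\<lambda>x. x $ i"] that qc G unfolding G'_def by simp
  qed
  then have "G *\<^sub>v v = 0\<^sub>v q" using G by (auto intro!: eq_vecI)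
  then show ?thesis using that v by blast
qed

lemma cols_le_rows_if_inj:
  fixes M :: "real mat"
  assumes M: "M \<in> carrier_mat p k"
    and inj: "\<And>c. c \<in> carrier_vec k \<Longrightarrow> c \<noteq> 0\<^sub>v k \<Longrightarrow> M *\<^sub>v c \<noteq> 0\<^sub>v p"
  shows "k \<le> p"
  using exists_nonzero_kernel_vec[OF M] inj by (metis not_le)

lemma exists_nonzero_vec_zero_prefix:
  fixes M :: "real mat"
  assumes M: "M \<in> carrier_mat p k" and k: "1 \<le> k" "k \<le> p"
  obtains c where "c \<in> carrier_vec k" "c \<noteq> 0\<^sub>v k" "\<And>i. i < k - 1 \<Longrightarrow> (M *\<^sub>v c) $ i = 0"
proof -
  define B where "B = mat (k - 1) k (\<lambda>(i,b). M $$ (i,b))"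
  obtain c where c: "c \<in> carrier_vec k" "c \<noteq> 0\<^sub>v k" "B *\<^sub>v c = 0\<^sub>v (k - 1)"
    using exists_nonzero_kernel_vec[of B "k - 1" k] k unfolding B_def by auto
  have "(M *\<^sub>v c) $ i = 0" if i: "i < k - 1" for i
  proof -
    have "row B i = row M i" using M i k unfolding B_def by (auto intro!: eq_vecI)
    then show ?thesis using arg_cong[OF c(3), of "\<lambda>v. v $ i"] M i k unfolding B_def by simp
  qed
  then show ?thesis using that c by blast
qed

lemma rank_le_if_cols_in_range:
  fixes A E :: "real mat"
  assumes A: "A \<in> carrier_mat m n" and E: "E \<in> carrier_mat m j"
    and range: "\<And>x. x \<in> set (cols A) \<Longrightarrow> \<exists>w \<in> carrier_vec j. x = E *\<^sub>v w"
  shows "vec_space.rank m A \<le> j"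
proof (rule ccontr)
  text \<open>\<open>j + 1\<close> independent columns would be \<open>C = E G\<close> with \<open>G\<close> of size \<open>j \<times> (j + 1)\<close>, and
    a kernel vector of \<open>G\<close> makes them dependent.\<close>
  interpret V: vec_space "TYPE(real)" m .
  assume "\<not> V.rank A \<le> j"
  obtain S where S: "maximal S (\<lambda>T. T \<subseteq> set (cols A) \<and> V.lin_indpt T)"
    using maximal_exists_superset[of "set (cols A)" "\<lambda>T. T \<subseteq> set (cols A) \<and> V.lin_indpt T" "{}"]
    by (auto simp: V.lin_dep_def)
  have "card S = V.rank A" using V.rank_card_indpt[OF A S] by simp
  then obtain xs where xs: "set xs \<subseteq> S" "distinct xs" "length xs = Suc j"
    using \<open>\<not> V.rank A \<le> j\<close> by (metis not_less_eq_eq obtain_subset_with_card_n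
        distinct_card finite_distinct_list card.infinite)
  have Scols: "S \<subseteq> set (cols A)" and indpt: "V.lin_indpt S" using S unfolding maximal_def by auto
  have xsc: "set xs \<subseteq> carrier_vec m" using xs(1) Scols A cols_dim by blast
  obtain w where w: "\<And>x. x \<in> set xs \<Longrightarrow> w x \<in> carrier_vec j \<and> x = E *\<^sub>v w x"
    using range xs(1) Scols by (metis subsetD)
  define C where "C = mat_of_cols m xs"
  define G where "G = mat_of_cols j (map w xs)"
  have C: "C \<in> carrier_mat m (Suc j)" and G: "G \<in> carrier_mat j (Suc j)"
    unfolding C_def G_def using xs(3) by auto
  have "C = E * G"
  proof (rule mat_col_eqI)
    fix b assume "b < dim_col (E * G)"
    then have b: "b < Suc j" using G by simp
    then have xb: "xs ! b \<in> set xs" using xs(3) by simp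
    then have "xs ! b \<in> carrier_vec m" using xsc by auto
    then show "col C b = col (E * G) b"
      using b E G xs(3) w[OF xb] unfolding C_def G_def by (simp add: col_mult2)
  qed (use C E G in auto)
  obtain v where v: "v \<in> carrier_vec (Suc j)" "v \<noteq> 0\<^sub>v (Suc j)" "G *\<^sub>v v = 0\<^sub>v j"
    using exists_nonzero_kernel_vec[OF G] by auto
  have "C *\<^sub>v v = 0\<^sub>v m" using \<open>C = E * G\<close> E G v by (auto intro!: eq_vecI)
  then have "V.lin_dep (set (cols C))"
    using C v xs xsc unfolding C_def by (intro V.lin_depI) auto
  moreover have "set (cols C) = set xs" using xsc unfolding C_def by simp
  ultimately show False using indpt xs(1) V.subset_li_is_li by blast
qed

lemma col_in_range_if_orth_compl_in_kernel:
  fixes A E :: "real mat"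
  assumes A: "A \<in> carrier_mat m n" and E: "E \<in> carrier_mat m j" and EE: "transpose_mat E * E = 1\<^sub>m j"
    and kernel: "\<And>y. y \<in> carrier_vec m \<Longrightarrow> transpose_mat E *\<^sub>v y = 0\<^sub>v j \<Longrightarrow> transpose_mat A *\<^sub>v y = 0\<^sub>v n"
    and l: "l < n"
  shows "col A l = E *\<^sub>v (transpose_mat E *\<^sub>v col A l)"
proof -
  define x where "x = col A l"
  define z where "z = x - E *\<^sub>v (transpose_mat E *\<^sub>v x)"
  have x: "x \<in> carrier_vec m" unfolding x_def using A l by simp
  have z: "z \<in> carrier_vec m" unfolding z_def using x E by simp
  have "transpose_mat E *\<^sub>v (E *\<^sub>v (transpose_mat E *\<^sub>v x))
      = (transpose_mat E * E) *\<^sub>v (transpose_mat E *\<^sub>v x)"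
    using E x by simp
  then have "transpose_mat E *\<^sub>v (E *\<^sub>v (transpose_mat E *\<^sub>v x)) = transpose_mat E *\<^sub>v x"
    using E EE x by simp
  then have zE: "transpose_mat E *\<^sub>v z = 0\<^sub>v j"
    unfolding z_def using E x by (simp add: mult_minus_distrib_mat_vec[of _ j m])
  text \<open>\<open>z\<close> is orthogonal to both \<open>x\<close> (a column of \<open>A\<close>) and the range of \<open>E\<close>.\<close>
  have "z \<bullet> x = (transpose_mat A *\<^sub>v z) $ l"
    unfolding x_def using A l z by (simp add: comm_scalar_prod[of z m])
  then have zx: "z \<bullet> x = 0" using kernel[OF z zE] l by simp
  have zEw: "z \<bullet> (E *\<^sub>v (transpose_mat E *\<^sub>v x)) = 0"
    using transpose_vec_mult_scalar[OF E _ z, of "transpose_mat E *\<^sub>v x"] zE E x by simp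
  have "z \<bullet> z = 0"
    using zx zEw z x E by (subst (2) z_def) (simp add: scalar_prod_minus_distrib[of _ m])
  then have "z = 0\<^sub>v m" using scalar_prod_self_eq_0_iff[OF z] by simp
  show ?thesis unfolding x_def[symmetric]
  proof (rule eq_vecI)
    fix i assume "i < dim_vec (E *\<^sub>v (transpose_mat E *\<^sub>v x))"
    then have "i < m" using E by simp
    then show "x $ i = (E *\<^sub>v (transpose_mat E *\<^sub>v x)) $ i"
      using arg_cong[OF \<open>z = 0\<^sub>v m\<close>, of "\<lambda>v. v $ i"] x E unfolding z_def by simp
  qed (use x E in simp)
qed

lemma exists_orth_compl_not_in_kernel:
  fixes A E :: "real mat"
  assumes A: "A \<in> carrier_mat m n" and E: "E \<in> carrier_mat m j" and EE: "transpose_mat E * E = 1\<^sub>m j"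
    and rank: "j < vec_space.rank m A"
  shows "\<exists>y. y \<in> carrier_vec m \<and> transpose_mat E *\<^sub>v y = 0\<^sub>v j \<and> transpose_mat A *\<^sub>v y \<noteq> 0\<^sub>v n"
proof (rule ccontr)
  assume "\<not> ?thesis"
  then have kernel: "transpose_mat A *\<^sub>v y = 0\<^sub>v n"
    if "y \<in> carrier_vec m" "transpose_mat E *\<^sub>v y = 0\<^sub>v j" for y
    using that by blast
  have "\<exists>w \<in> carrier_vec j. x = E *\<^sub>v w" if x: "x \<in> set (cols A)" for x
  proof -
    obtain l where l: "l < n" "x = col A l" using x A by (auto simp: cols_def)
    show ?thesis
      using col_in_range_if_orth_compl_in_kernel[OF A E EE kernel l(1)] l E A
      by (intro bexI[of _ "transpose_mat E *\<^sub>v col A l"]) auto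
  qed
  then have "vec_space.rank m A \<le> j" by (rule rank_le_if_cols_in_range[OF A E])
  then show False using rank by simp
qed

lemma exists_eigenvector_orth:
  fixes A E :: "real mat"
  assumes A: "A \<in> carrier_mat m n" and E: "E \<in> carrier_mat m j" and EE: "transpose_mat E * E = 1\<^sub>m j"
    and eig: "\<And>i. i < j \<Longrightarrow> (A * transpose_mat A) *\<^sub>v col E i = lam i \<cdot>\<^sub>v col E i"
    and rank: "j < vec_space.rank m A"
  obtains y mu where "y \<in> unit_sphere_orth E m" "(A * transpose_mat A) *\<^sub>v y = mu \<cdot>\<^sub>v y" "0 < mu"
proof -
  have At: "transpose_mat A \<in> carrier_mat n m" using A by simp
  obtain y where y: "y \<in> carrier_vec m" "transpose_mat E *\<^sub>v y = 0\<^sub>v j"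
    "transpose_mat A *\<^sub>v y \<noteq> 0\<^sub>v n"
    using exists_orth_compl_not_in_kernel[OF A E EE rank] by blast
  have y0: "y \<noteq> 0\<^sub>v m" using y At by auto
  have "(1 / vec_norm y) \<cdot>\<^sub>v y \<in> unit_sphere_orth E m"
    using y E vec_norm_pos[OF y(1) y0] vec_norm_sq[of "(1 / vec_norm y) \<cdot>\<^sub>v y"]
    by (auto simp: unit_sphere_orth_def vec_norm_smult mult_mat_vec)
  then obtain y1 where y1: "y1 \<in> unit_sphere_orth E m"
    and max1: "\<And>z. z \<in> unit_sphere_orth E m \<Longrightarrow>
      (transpose_mat A *\<^sub>v z) \<bullet> (transpose_mat A *\<^sub>v z) \<le> (transpose_mat A *\<^sub>v y1) \<bullet> (transpose_mat A *\<^sub>v y1)"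
    using quadratic_form_attains_max[OF At E] by blast
  define mu where "mu = (transpose_mat A *\<^sub>v y1) \<bullet> (transpose_mat A *\<^sub>v y1)"
  have max: "(transpose_mat A *\<^sub>v z) \<bullet> (transpose_mat A *\<^sub>v z) \<le> mu * (z \<bullet> z)"
    if "z \<in> carrier_vec m" "transpose_mat E *\<^sub>v z = 0\<^sub>v j" for z
    using quadratic_form_le_on_orth[OF At E _ that] max1 unfolding mu_def by blast
  have "0 < mu * (y \<bullet> y)"
    using max[OF y(1,2)] scalar_prod_self_pos[of "transpose_mat A *\<^sub>v y" n] y At by force
  then have "0 < mu" using scalar_prod_self_nonneg[of y] by (simp add: zero_less_mult_iff)
  moreover have "(A * transpose_mat A) *\<^sub>v y1 = mu \<cdot>\<^sub>v y1"
    using y1 E by (intro rayleigh_maximiser_is_eigenvector[OF A E eig max])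
      (auto simp: unit_sphere_orth_def mu_def)
  ultimately show ?thesis using that y1 by blast
qed

lemma orthonormal_append_col:
  fixes E :: "real mat"
  assumes E: "E \<in> carrier_mat m j" "transpose_mat E * E = 1\<^sub>m j" and y: "y \<in> unit_sphere_orth E m"
  defines "E' \<equiv> mat_of_cols m (cols E @ [y])"
  shows "E' \<in> carrier_mat m (Suc j)" "\<And>i. i < Suc j \<Longrightarrow> col E' i = (if i < j then col E i else y)"
    and "transpose_mat E' * E' = 1\<^sub>m (Suc j)"
proof -
  have yc: "y \<in> carrier_vec m" "y \<bullet> y = 1" and Ey: "transpose_mat E *\<^sub>v y = 0\<^sub>v j"
    using y E unfolding unit_sphere_orth_def by auto
  show E': "E' \<in> carrier_mat m (Suc j)"
    unfolding E'_def using E mat_of_cols_carrier(1)[of m "cols E @ [y]"] by simp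
  show col: "col E' i = (if i < j then col E i else y)" if "i < Suc j" for i
    unfolding E'_def using that E yc by (auto simp: nth_append)
  have orth: "col E a \<bullet> y = 0" "y \<bullet> col E a = 0" if "a < j" for a
    using arg_cong[OF Ey, of "\<lambda>v. v $ a"] that E yc comm_scalar_prod[of y m "col E a"] by auto
  have EE: "col E a \<bullet> col E b = (if a = b then 1 else 0)" if "a < j" "b < j" for a b
  proof -
    have "col E a \<bullet> col E b = (transpose_mat E * E) $$ (a,b)" using that E(1) by simp
    also have "\<dots> = (if a = b then 1 else 0)" unfolding E(2) using that by simp
    finally show ?thesis .
  qed
  show "transpose_mat E' * E' = 1\<^sub>m (Suc j)"
    using E' by (intro eq_matI) (auto simp: col EE orth yc(2))
qed

lemma orthonormal_eigenvectors_exist: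
  fixes A :: "real mat"
  assumes A: "A \<in> carrier_mat m n"
  shows "j \<le> vec_space.rank m A \<Longrightarrow> \<exists>E lam. E \<in> carrier_mat m j \<and> transpose_mat E * E = 1\<^sub>m j \<and>
     (\<forall>i<j. (A * transpose_mat A) *\<^sub>v col E i = lam i \<cdot>\<^sub>v col E i \<and> 0 < lam i)"
proof (induction j)
  case 0
  show ?case by (intro exI[of _ "0\<^sub>m m 0"] exI[of _ "\<lambda>_. 1"]) (auto intro!: eq_matI)
next
  case (Suc j)
  then obtain E lam where E: "E \<in> carrier_mat m j" "transpose_mat E * E = 1\<^sub>m j"
    and eig: "\<forall>i<j. (A * transpose_mat A) *\<^sub>v col E i = lam i \<cdot>\<^sub>v col E i \<and> 0 < lam i" by auto
  obtain y mu where y: "y \<in> unit_sphere_orth E m" "(A * transpose_mat A) *\<^sub>v y = mu \<cdot>\<^sub>v y" "0 < mu"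
    using exists_eigenvector_orth[OF A E] eig Suc.prems by auto
  show ?case
    using orthonormal_append_col[OF E y(1)] eig y(2,3)
    by (intro exI[of _ "mat_of_cols m (cols E @ [y])"] exI[of _ "lam(j := mu)"]) auto
qed

lemma finite_eigenvalues: "B \<in> carrier_mat n n \<Longrightarrow> finite {l :: real. eigenvalue B l}"
proof -
  assume B: "B \<in> carrier_mat n n"
  have "char_poly B \<noteq> 0" using degree_monic_char_poly[OF B] by (metis coeff_0 zero_neq_one)
  then show ?thesis using poly_roots_finite eigenvalue_root_char_poly[OF B] by simp
qed

lemma sigma_min_sq_le_eigenvalue:
  fixes A :: "real mat"
  assumes A: "A \<in> carrier_mat m n" and y: "y \<in> carrier_vec m" "y \<noteq> 0\<^sub>v m"
    and ev: "(A * transpose_mat A) *\<^sub>v y = lam \<cdot>\<^sub>v y" and lam: "0 < lam"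
  shows "0 < sigma_min A" "(sigma_min A)^2 \<le> lam"
proof -
  define P where "P = {s \<in> sing_vals A. s > 0}"
  define v where "v = transpose_mat A *\<^sub>v y"
  have v: "v \<in> carrier_vec n" unfolding v_def using A y by simp
  have "v \<bullet> v = y \<bullet> ((A * transpose_mat A) *\<^sub>v y)"
    unfolding v_def using scalar_prod_mult_mat_vec[of "transpose_mat A" n m y y] A y by simp
  then have "v \<bullet> v = lam * (y \<bullet> y)" using ev y by simp
  then have "v \<noteq> 0\<^sub>v n" using scalar_prod_self_pos[OF y] lam by auto
  moreover have "(transpose_mat A * A) *\<^sub>v v = transpose_mat A *\<^sub>v ((A * transpose_mat A) *\<^sub>v y)"
    unfolding v_def using A y by simp
  then have "(transpose_mat A * A) *\<^sub>v v = lam \<cdot>\<^sub>v v"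
    unfolding ev v_def using A y by (simp add: mult_mat_vec)
  ultimately have "eigenvalue (transpose_mat A * A) ((sqrt lam)^2)"
    using v A lam unfolding eigenvalue_def eigenvector_def by auto
  then have mem: "sqrt lam \<in> P" unfolding P_def sing_vals_def using lam by simp
  have "P \<subseteq> sqrt ` {l. eigenvalue (transpose_mat A * A) l}"
    unfolding P_def sing_vals_def by (auto intro!: image_eqI)
  then have fin: "finite P" using finite_eigenvalues[of "transpose_mat A * A" n] A finite_subset by auto
  have "sigma_min A \<in> P" unfolding sigma_min_def P_def[symmetric] using fin mem by (auto intro: Min_in)
  then show pos: "0 < sigma_min A" unfolding P_def by simp
  have "sigma_min A \<le> sqrt lam" unfolding sigma_min_def P_def[symmetric] using fin mem by simp
  then show "(sigma_min A)^2 \<le> lam" using pos lam by (metis power_mono real_sqrt_pow2 less_imp_le)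
qed

lemma rayleigh_lower_bound:
  fixes A E :: "real mat"
  assumes A: "A \<in> carrier_mat m n" and E: "E \<in> carrier_mat m k" and EE: "transpose_mat E * E = 1\<^sub>m k"
    and eig: "\<And>i. i < k \<Longrightarrow> (A * transpose_mat A) *\<^sub>v col E i = lam i \<cdot>\<^sub>v col E i"
    and lam: "\<And>i. i < k \<Longrightarrow> s \<le> lam i"
    and c: "c \<in> carrier_vec k"
  shows "s * (c \<bullet> c) \<le> (transpose_mat A *\<^sub>v (E *\<^sub>v c)) \<bullet> (transpose_mat A *\<^sub>v (E *\<^sub>v c))"
proof -
  define D where "D = mat k k (\<lambda>(a,b). if a = b then lam a else (0::real))"
  have D: "D \<in> carrier_mat k k" unfolding D_def by simp
  have "(A * transpose_mat A) * E = E * D"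
  proof (rule mat_col_eqI)
    fix b assume "b < dim_col (E * D)"
    then have b: "b < k" using D by simp
    have "col D b = lam b \<cdot>\<^sub>v unit_vec k b" unfolding D_def using b by (auto simp: unit_vec_def)
    moreover have "E *\<^sub>v unit_vec k b = col E b" using E b by (auto intro!: eq_vecI)
    ultimately have "col (E * D) b = lam b \<cdot>\<^sub>v col E b" using E D b by (simp add: mult_mat_vec)
    moreover have "col ((A * transpose_mat A) * E) b = (A * transpose_mat A) *\<^sub>v col E b"
      using A E b by (intro col_mult2) auto
    ultimately show "col ((A * transpose_mat A) * E) b = col (E * D) b" using eig[OF b] by simp
  qed (use A E D in auto)
  then have "(A * transpose_mat A) *\<^sub>v (E *\<^sub>v c) = E *\<^sub>v (D *\<^sub>v c)"
    using A E D c by (metis assoc_mult_mat_vec mult_carrier_mat transpose_carrier_mat)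
  then have "(transpose_mat A *\<^sub>v (E *\<^sub>v c)) \<bullet> (transpose_mat A *\<^sub>v (E *\<^sub>v c)) = c \<bullet> (D *\<^sub>v c)"
    using scalar_prod_mult_mat_vec[of "transpose_mat A" n m "E *\<^sub>v c" "E *\<^sub>v c"] A E D c
      orthonormal_cols_preserve_scalar_prod[OF E EE c, of "D *\<^sub>v c"] by simp
  also have "c \<bullet> (D *\<^sub>v c) = (\<Sum>i<k. lam i * (c $ i)^2)"
  proof -
    have "row D i = lam i \<cdot>\<^sub>v unit_vec k i" if "i < k" for i
      unfolding D_def using that by (auto intro!: eq_vecI simp: unit_vec_def)
    then have "(D *\<^sub>v c) $ i = lam i * c $ i" if "i < k" for i using D c that by simp
    then show ?thesis
      using c D by (auto simp: scalar_prod_def atLeast0LessThan power2_eq_square intro!: sum.cong)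
  qed
  finally have eq: "(transpose_mat A *\<^sub>v (E *\<^sub>v c)) \<bullet> (transpose_mat A *\<^sub>v (E *\<^sub>v c))
      = (\<Sum>i<k. lam i * (c $ i)^2)" .
  have "s * (c \<bullet> c) = (\<Sum>i<k. s * (c $ i)^2)" using c by (simp add: scalar_prod_self sum_distrib_left)
  also have "\<dots> \<le> (\<Sum>i<k. lam i * (c $ i)^2)" using lam by (intro sum_mono mult_right_mono) auto
  finally show ?thesis unfolding eq .
qed

lemma sigma_min_frame:
  fixes A :: "real mat"
  assumes A: "A \<in> carrier_mat m n" and k: "0 < k" "k \<le> vec_space.rank m A"
  obtains E where "E \<in> carrier_mat m k" "transpose_mat E * E = 1\<^sub>m k" "0 < sigma_min A"
    "\<And>c. c \<in> carrier_vec k \<Longrightarrow>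
      (sigma_min A)^2 * (c \<bullet> c) \<le> (transpose_mat A *\<^sub>v (E *\<^sub>v c)) \<bullet> (transpose_mat A *\<^sub>v (E *\<^sub>v c))"
proof -
  obtain E lam where E: "E \<in> carrier_mat m k" and EE: "transpose_mat E * E = 1\<^sub>m k"
    and eig: "\<And>i. i < k \<Longrightarrow> (A * transpose_mat A) *\<^sub>v col E i = lam i \<cdot>\<^sub>v col E i \<and> 0 < lam i"
    using orthonormal_eigenvectors_exist[OF A k(2)] by blast
  have col: "col E i \<in> carrier_vec m" "col E i \<noteq> 0\<^sub>v m" if "i < k" for i
  proof -
    have "col E i \<bullet> col E i = (transpose_mat E * E) $$ (i,i)" using E that by simp
    then show "col E i \<noteq> 0\<^sub>v m" using EE that by auto
  qed (use E that in simp)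
  note sigma = sigma_min_sq_le_eigenvalue[OF A col]
  show ?thesis
  proof (rule that[OF E EE])
    show "0 < sigma_min A"
      using sigma(1)[OF k(1) k(1) conjunct1[OF eig[OF k(1)]] conjunct2[OF eig[OF k(1)]]] .
    show "(sigma_min A)^2 * (c \<bullet> c) \<le> (transpose_mat A *\<^sub>v (E *\<^sub>v c)) \<bullet> (transpose_mat A *\<^sub>v (E *\<^sub>v c))"
      if "c \<in> carrier_vec k" for c
      using eig sigma(2) by (intro rayleigh_lower_bound[OF A E EE _ _ that]) blast+
  qed
qed

section \<open>Singular values of the sampled matrix \<open>W\<close>\<close>

lemma quadratic_form_perturbation:
  fixes X Y :: "real mat"
  assumes X: "X \<in> carrier_mat r c" and Y: "Y \<in> carrier_mat r' c" and x: "x \<in> carrier_vec c"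
  shows "(X *\<^sub>v x) \<bullet> (X *\<^sub>v x) - frob_norm (transpose_mat X * X - transpose_mat Y * Y) * (x \<bullet> x)
     \<le> (Y *\<^sub>v x) \<bullet> (Y *\<^sub>v x)"
proof -
  have XX: "transpose_mat X * X \<in> carrier_mat c c" and YY: "transpose_mat Y * Y \<in> carrier_mat c c"
    using X Y by auto
  have "x \<bullet> ((transpose_mat X * X - transpose_mat Y * Y) *\<^sub>v x)
      = (X *\<^sub>v x) \<bullet> (X *\<^sub>v x) - (Y *\<^sub>v x) \<bullet> (Y *\<^sub>v x)"
    using XX YY x scalar_prod_mult_mat_vec[OF X x x] scalar_prod_mult_mat_vec[OF Y x x]
    by (simp add: minus_mult_distrib_mat_vec[of _ c c] scalar_prod_minus_distrib[of _ c])
  moreover have "\<bar>x \<bullet> ((transpose_mat X * X - transpose_mat Y * Y) *\<^sub>v x)\<bar>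
     \<le> frob_norm (transpose_mat X * X - transpose_mat Y * Y) * (x \<bullet> x)"
    using XX YY x by (intro abs_quadratic_form_le[of _ c]) (auto simp: minus_carrier_mat)
  ultimately show ?thesis by linarith
qed

text \<open>By Cauchy--Schwarz, \<open>|S\<^sup>T y|\<^sup>2 = y \<bullet> S S\<^sup>T y \<le> |y| |S S\<^sup>T y|\<close>, so a lower Rayleigh bound for
  \<open>S S\<^sup>T\<close> at \<open>y\<close> transfers to \<open>S\<^sup>T S\<close> at \<open>S\<^sup>T y\<close>.\<close>

lemma rayleigh_lower_bound_transfer:
  fixes S :: "real mat"
  assumes S: "S \<in> carrier_mat m p" and y: "y \<in> carrier_vec m" "y \<noteq> 0\<^sub>v m" and q: "0 < q"
    and ray: "q * (y \<bullet> y) \<le> (transpose_mat S *\<^sub>v y) \<bullet> (transpose_mat S *\<^sub>v y)"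
  shows "q * ((transpose_mat S *\<^sub>v y) \<bullet> (transpose_mat S *\<^sub>v y))
    \<le> (S *\<^sub>v (transpose_mat S *\<^sub>v y)) \<bullet> (S *\<^sub>v (transpose_mat S *\<^sub>v y))"
proof -
  define x where "x = transpose_mat S *\<^sub>v y"
  define Z where "Z = (S *\<^sub>v x) \<bullet> (S *\<^sub>v x)"
  have x: "x \<in> carrier_vec p" unfolding x_def using S y by simp
  have yy: "0 < y \<bullet> y" using scalar_prod_self_pos[OF y] .
  have "x \<bullet> x = y \<bullet> (S *\<^sub>v x)"
    unfolding x_def using transpose_vec_mult_scalar[OF S x y(1)] x_def by simp
  then have "(x \<bullet> x)^2 \<le> (y \<bullet> y) * Z"
    unfolding Z_def using scalar_prod_sq_le[of y m "S *\<^sub>v x"] S x y by simp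
  moreover have "q * (y \<bullet> y) * (x \<bullet> x) \<le> (x \<bullet> x) * (x \<bullet> x)"
    using ray scalar_prod_self_nonneg[of x] unfolding x_def by (intro mult_right_mono) auto
  ultimately have "(y \<bullet> y) * (q * (x \<bullet> x)) \<le> (y \<bullet> y) * Z"
    by (simp add: power2_eq_square algebra_simps)
  then show ?thesis using yy unfolding Z_def x_def by simp
qed

locale sorted_svd =
  fixes W Uf Df Vf :: "real mat" and p :: nat
  assumes Uf: "Uf \<in> carrier_mat p p" and Df: "Df \<in> carrier_mat p p" and Vf: "Vf \<in> carrier_mat p p"
    and Uf_orth: "transpose_mat Uf * Uf = 1\<^sub>m p" and Vf_orth: "transpose_mat Vf * Vf = 1\<^sub>m p"
    and Df_diag: "\<forall>a<p. \<forall>b<p. a \<noteq> b \<longrightarrow> Df $$ (a,b) = 0"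
    and Df_nonneg: "\<forall>a<p. 0 \<le> Df $$ (a,a)"
    and Df_sorted: "\<forall>a b. a \<le> b \<longrightarrow> b < p \<longrightarrow> Df $$ (b,b) \<le> Df $$ (a,a)"
    and W_svd: "W = Uf * Df * transpose_mat Vf"
begin

lemma W_carrier: "W \<in> carrier_mat p p"
  unfolding W_svd using Uf Df Vf by simp

lemma W_mult_vec: "x \<in> carrier_vec p \<Longrightarrow> W *\<^sub>v x = Uf *\<^sub>v (Df *\<^sub>v (transpose_mat Vf *\<^sub>v x))"
  unfolding W_svd using Uf Df Vf by (simp add: assoc_mult_mat_vec[of _ p p _ p])

lemma Df_mult_vec_nth: "z \<in> carrier_vec p \<Longrightarrow> i < p \<Longrightarrow> (Df *\<^sub>v z) $ i = Df $$ (i,i) * z $ i"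
proof -
  assume z: "z \<in> carrier_vec p" and i: "i < p"
  have "row Df i = Df $$ (i,i) \<cdot>\<^sub>v unit_vec p i"
    using Df Df_diag i by (auto intro!: eq_vecI simp: unit_vec_def)
  then show ?thesis using Df z i by simp
qed

lemma W_mult_right_singular_vec:
  assumes a: "a < p"
  shows "W *\<^sub>v col Vf a = Df $$ (a,a) \<cdot>\<^sub>v col Uf a"
proof -
  have "transpose_mat Vf *\<^sub>v col Vf a = col (transpose_mat Vf * Vf) a" using Vf a by simp
  also have "\<dots> = unit_vec p a" unfolding Vf_orth using a by (auto intro!: eq_vecI)
  finally have "W *\<^sub>v col Vf a = Uf *\<^sub>v (Df *\<^sub>v unit_vec p a)" using W_mult_vec[of "col Vf a"] Vf a by simp
  also have "Df *\<^sub>v unit_vec p a = col Df a" using Df a by (auto intro!: eq_vecI)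
  also have "col Df a = Df $$ (a,a) \<cdot>\<^sub>v unit_vec p a"
    using Df Df_diag a by (auto intro!: eq_vecI simp: unit_vec_def)
  also have "Uf *\<^sub>v (Df $$ (a,a) \<cdot>\<^sub>v unit_vec p a) = Df $$ (a,a) \<cdot>\<^sub>v (Uf *\<^sub>v unit_vec p a)"
    using Uf by (intro mult_mat_vec) auto
  also have "Uf *\<^sub>v unit_vec p a = col Uf a" using Uf a by (auto intro!: eq_vecI)
  finally show ?thesis .
qed

lemma W_norm_le_on_tail:
  assumes x: "x \<in> carrier_vec p" and k: "1 \<le> k" "k \<le> p"
    and tail: "\<And>i. i < k - 1 \<Longrightarrow> (transpose_mat Vf *\<^sub>v x) $ i = 0"
  shows "(W *\<^sub>v x) \<bullet> (W *\<^sub>v x) \<le> (Df $$ (k-1,k-1))^2 * (x \<bullet> x)"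
proof -
  define z where "z = transpose_mat Vf *\<^sub>v x"
  have z: "z \<in> carrier_vec p" unfolding z_def using Vf x by simp
  have "(W *\<^sub>v x) \<bullet> (W *\<^sub>v x) = (Df *\<^sub>v z) \<bullet> (Df *\<^sub>v z)"
    unfolding W_mult_vec[OF x] z_def[symmetric]
    using orthonormal_cols_preserve_scalar_prod[OF Uf Uf_orth] Df z by simp
  also have "\<dots> = (\<Sum>i<p. (Df $$ (i,i) * z $ i)^2)"
    using Df z Df_mult_vec_nth[OF z] by (simp add: scalar_prod_self)
  also have "\<dots> \<le> (\<Sum>i<p. (Df $$ (k-1,k-1))^2 * (z $ i)^2)"
  proof (rule sum_mono)
    fix i assume i: "i \<in> {..<p}"
    show "(Df $$ (i,i) * z $ i)^2 \<le> (Df $$ (k-1,k-1))^2 * (z $ i)^2"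
    proof (cases "i < k - 1")
      case True
      then show ?thesis using tail unfolding z_def by simp
    next
      case False
      then have "Df $$ (i,i) \<le> Df $$ (k-1,k-1)" "0 \<le> Df $$ (i,i)"
        using Df_sorted Df_nonneg i by auto
      then have "(Df $$ (i,i))^2 \<le> (Df $$ (k-1,k-1))^2" by (rule power_mono)
      then show ?thesis by (simp add: power_mult_distrib mult_right_mono)
    qed
  qed
  also have "\<dots> = (Df $$ (k-1,k-1))^2 * (z \<bullet> z)" using z by (simp add: scalar_prod_self sum_distrib_left)
  also have "z \<bullet> z = x \<bullet> x"
    unfolding z_def using orthonormal_cols_preserve_scalar_prod[of "transpose_mat Vf" p p x x]
      orthogonal_mat_transpose[OF Vf Vf_orth] Vf x by simp
  finally show ?thesis .
qed

end

context sorted_svd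
begin

lemma sigma_k_lower_bound:
  fixes S E :: "real mat"
  assumes S: "S \<in> carrier_mat m p" and E: "E \<in> carrier_mat m k" "transpose_mat E * E = 1\<^sub>m k"
    and k: "1 \<le> k" and q: "0 < q"
    and ray: "\<And>c. c \<in> carrier_vec k \<Longrightarrow>
       q * (c \<bullet> c) \<le> (transpose_mat S *\<^sub>v (E *\<^sub>v c)) \<bullet> (transpose_mat S *\<^sub>v (E *\<^sub>v c))"
    and pert: "frob_norm (transpose_mat S * S - transpose_mat W * W) \<le> e"
  shows "k \<le> p" "q - e \<le> (Df $$ (k-1,k-1))^2"
proof -
  have SE: "transpose_mat S * E \<in> carrier_mat p k" using S E by simp
  have Ec: "(E *\<^sub>v c) \<bullet> (E *\<^sub>v c) = c \<bullet> c" if "c \<in> carrier_vec k" for c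
    using orthonormal_cols_preserve_scalar_prod[OF E that that] .
  have SEc: "0 < (transpose_mat S *\<^sub>v (E *\<^sub>v c)) \<bullet> (transpose_mat S *\<^sub>v (E *\<^sub>v c))"
    if c: "c \<in> carrier_vec k" "c \<noteq> 0\<^sub>v k" for c
    using ray[OF c(1)] q scalar_prod_self_pos[OF c] by (smt (verit) mult_pos_pos)
  show kp: "k \<le> p"
  proof (rule cols_le_rows_if_inj[OF SE])
    fix c :: "real vec" assume c: "c \<in> carrier_vec k" "c \<noteq> 0\<^sub>v k"
    show "(transpose_mat S * E) *\<^sub>v c \<noteq> 0\<^sub>v p" using SEc[OF c] S E c by auto
  qed
  text \<open>Pick \<open>x = S\<^sup>T E c\<close> orthogonal to the top \<open>k - 1\<close> right singular vectors of \<open>W\<close>.\<close>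
  obtain c where c: "c \<in> carrier_vec k" "c \<noteq> 0\<^sub>v k"
    and prefix: "\<And>i. i < k - 1 \<Longrightarrow> ((transpose_mat Vf * (transpose_mat S * E)) *\<^sub>v c) $ i = 0"
    using exists_nonzero_vec_zero_prefix[of "transpose_mat Vf * (transpose_mat S * E)" p k] Vf SE k kp
    by auto
  define y where "y = E *\<^sub>v c"
  define x where "x = transpose_mat S *\<^sub>v y"
  have y: "y \<in> carrier_vec m" "y \<noteq> 0\<^sub>v m"
    using E c Ec[OF c(1)] scalar_prod_self_pos[OF c(1,2)] unfolding y_def by auto
  have x: "x \<in> carrier_vec p" "0 < x \<bullet> x" unfolding x_def y_def using S E c SEc[OF c(1,2)] by auto
  have "(transpose_mat Vf * (transpose_mat S * E)) *\<^sub>v c = transpose_mat Vf *\<^sub>v ((transpose_mat S * E) *\<^sub>v c)"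
    using Vf SE c by (intro assoc_mult_mat_vec) auto
  also have "(transpose_mat S * E) *\<^sub>v c = x"
    unfolding x_def y_def using S E c by (intro assoc_mult_mat_vec) auto
  finally have tail: "(transpose_mat Vf *\<^sub>v x) $ i = 0" if "i < k - 1" for i
    using prefix[OF that] by simp
  have "q * (x \<bullet> x) \<le> (S *\<^sub>v x) \<bullet> (S *\<^sub>v x)"
    using rayleigh_lower_bound_transfer[OF S y q] ray[OF c(1)] Ec[OF c(1)] unfolding x_def y_def by simp
  moreover have "(S *\<^sub>v x) \<bullet> (S *\<^sub>v x) - e * (x \<bullet> x) \<le> (W *\<^sub>v x) \<bullet> (W *\<^sub>v x)"
    using quadratic_form_perturbation[OF S W_carrier x(1)] mult_right_mono[OF pert scalar_prod_self_nonneg[of x]]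
    by linarith
  moreover have "(W *\<^sub>v x) \<bullet> (W *\<^sub>v x) \<le> (Df $$ (k-1,k-1))^2 * (x \<bullet> x)"
    by (rule W_norm_le_on_tail[OF x(1) k kp tail])
  ultimately have "(q - e) * (x \<bullet> x) \<le> (Df $$ (k-1,k-1))^2 * (x \<bullet> x)" by (simp add: algebra_simps)
  then show "q - e \<le> (Df $$ (k-1,k-1))^2" using x(2) by simp
qed

end

context sorted_svd
begin

lemma col_scaled_sample:
  fixes S V U :: "real mat"
  assumes S: "S \<in> carrier_mat m p" and kp: "k \<le> p"
    and V: "V = mat p k (\<lambda>(a,b). Vf $$ (a,b))"
    and U: "U = S * V * mat k k (\<lambda>(a,b). if a = b then 1 / Df $$ (a,a) else 0)"
    and i: "i < k"
  shows "col U i = (1 / Df $$ (i,i)) \<cdot>\<^sub>v (S *\<^sub>v col Vf i)"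
proof -
  define Dinv where "Dinv = mat k k (\<lambda>(a,b). if a = b then 1 / Df $$ (a,a) else (0::real))"
  have SV: "S * V \<in> carrier_mat m k" using S unfolding V by simp
  have "col U i = (S * V) *\<^sub>v col Dinv i"
    unfolding U Dinv_def[symmetric] using SV i by (intro col_mult2) (auto simp: Dinv_def)
  also have "col Dinv i = (1 / Df $$ (i,i)) \<cdot>\<^sub>v unit_vec k i"
    using i unfolding Dinv_def by (auto intro!: eq_vecI simp: unit_vec_def)
  also have "(S * V) *\<^sub>v ((1 / Df $$ (i,i)) \<cdot>\<^sub>v unit_vec k i)
      = (1 / Df $$ (i,i)) \<cdot>\<^sub>v ((S * V) *\<^sub>v unit_vec k i)"
    using SV by (intro mult_mat_vec) auto
  also have "(S * V) *\<^sub>v unit_vec k i = col (S * V) i" using SV i by (auto intro!: eq_vecI)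
  also have "col (S * V) i = S *\<^sub>v col V i" using S i unfolding V by (intro col_mult2) auto
  also have "col V i = col Vf i" using Vf i kp unfolding V by (auto intro!: eq_vecI)
  finally show ?thesis .
qed

lemma gram_minus_one_entry:
  fixes S V U :: "real mat"
  assumes S: "S \<in> carrier_mat m p" and kp: "k \<le> p" and pos: "\<And>a. a < k \<Longrightarrow> 0 < Df $$ (a,a)"
    and V: "V = mat p k (\<lambda>(a,b). Vf $$ (a,b))"
    and U: "U = S * V * mat k k (\<lambda>(a,b). if a = b then 1 / Df $$ (a,a) else 0)"
    and a: "a < k" and b: "b < k"
  shows "(transpose_mat U * U - 1\<^sub>m k) $$ (a,b)
    = (transpose_mat Vf * ((transpose_mat S * S - transpose_mat W * W) * Vf)) $$ (a,b)
      / (Df $$ (a,a) * Df $$ (b,b))"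
proof -
  define v where "v i = col Vf i" for i
  define d where "d i = Df $$ (i,i)" for i
  have v: "v i \<in> carrier_vec p" for i unfolding v_def using Vf col_dim[of Vf i] by simp
  have SV: "S * V \<in> carrier_mat m k" using S unfolding V by simp
  have U_carrier: "U \<in> carrier_mat m k" using SV unfolding U by simp
  have colU: "col U i = (1 / d i) \<cdot>\<^sub>v (S *\<^sub>v v i)" if "i < k" for i
    using col_scaled_sample[OF S kp V U that] unfolding v_def d_def .
  have WW: "v a \<bullet> ((transpose_mat W * W) *\<^sub>v v b) = (if a = b then d a * d b else 0)"
  proof -
    have "v a \<bullet> ((transpose_mat W * W) *\<^sub>v v b) = (W *\<^sub>v v a) \<bullet> (W *\<^sub>v v b)"
      using scalar_prod_mult_mat_vec[OF W_carrier v v] by simp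
    also have "\<dots> = d a * d b * (col Uf a \<bullet> col Uf b)"
      using W_mult_right_singular_vec a b kp Uf unfolding v_def d_def by simp
    also have "col Uf a \<bullet> col Uf b = (transpose_mat Uf * Uf) $$ (a,b)" using Uf a b kp by simp
    finally show ?thesis unfolding Uf_orth using a b kp by simp
  qed
  have "(transpose_mat U * U) $$ (a,b) = (v a \<bullet> ((transpose_mat S * S) *\<^sub>v v b)) / (d a * d b)"
    using U_carrier a b colU S v scalar_prod_mult_mat_vec[OF S v v, of a b] by simp
  moreover have "(transpose_mat Vf * ((transpose_mat S * S - transpose_mat W * W) * Vf)) $$ (a,b)
      = v a \<bullet> ((transpose_mat S * S) *\<^sub>v v b) - v a \<bullet> ((transpose_mat W * W) *\<^sub>v v b)"
  proof -
    have SS: "transpose_mat S * S \<in> carrier_mat p p" and WW': "transpose_mat W * W \<in> carrier_mat p p"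
      using S W_carrier by auto
    have "(transpose_mat Vf * ((transpose_mat S * S - transpose_mat W * W) * Vf)) $$ (a,b)
        = v a \<bullet> ((transpose_mat S * S - transpose_mat W * W) *\<^sub>v v b)"
      using col_mult2[OF minus_carrier_mat[OF WW'] Vf, of b "transpose_mat S * S"] Vf a b kp
      unfolding v_def by simp
    then show ?thesis
      using SS WW' v by (simp add: minus_mult_distrib_mat_vec[OF SS WW'] scalar_prod_minus_distrib[of _ p])
  qed
  ultimately show ?thesis
    using U_carrier a b pos[OF a] pos[OF b] unfolding WW d_def
    by (cases "a = b") (simp_all add: field_simps)
qed

lemma frob_norm_gram_minus_one_le:
  fixes S V U :: "real mat"
  assumes S: "S \<in> carrier_mat m p" and k: "1 \<le> k" "k \<le> p" and pos: "0 < Df $$ (k-1,k-1)"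
    and V: "V = mat p k (\<lambda>(a,b). Vf $$ (a,b))"
    and U: "U = S * V * mat k k (\<lambda>(a,b). if a = b then 1 / Df $$ (a,a) else 0)"
  shows "frob_norm (transpose_mat U * U - 1\<^sub>m k)
    \<le> frob_norm (transpose_mat S * S - transpose_mat W * W) / (Df $$ (k-1,k-1))^2"
proof -
  define H where "H = transpose_mat Vf * ((transpose_mat S * S - transpose_mat W * W) * Vf)"
  define d where "d = Df $$ (k-1,k-1)"
  have H: "H \<in> carrier_mat p p"
    unfolding H_def using S Vf W_carrier by (meson minus_carrier_mat mult_carrier_mat transpose_carrier_mat)
  have "S * V \<in> carrier_mat m k" using S unfolding V by simp
  then have U_carrier: "U \<in> carrier_mat m k" unfolding U by simp
  have dle: "d \<le> Df $$ (a,a)" if "a < k" for a using Df_sorted that k unfolding d_def by simp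
  have entry: "(transpose_mat U * U - 1\<^sub>m k) $$ (a,b) = H $$ (a,b) / (Df $$ (a,a) * Df $$ (b,b))"
    if "a < k" "b < k" for a b
    unfolding H_def using dle pos that
    by (intro gram_minus_one_entry[OF S k(2) _ V U]) (auto simp: d_def intro: less_le_trans)
  have "(frob_norm (transpose_mat U * U - 1\<^sub>m k))^2 = (\<Sum>a<k. \<Sum>b<k. (H $$ (a,b))^2 / (Df $$ (a,a) * Df $$ (b,b))^2)"
    using U_carrier entry by (simp add: frob_norm_sq power_divide)
  also have "\<dots> \<le> (\<Sum>a<k. \<Sum>b<k. (H $$ (a,b))^2 / (d^2)^2)"
  proof (intro sum_mono)
    fix a b assume "a \<in> {..<k}" "b \<in> {..<k}"
    then have ab: "d \<le> Df $$ (a,a)" "d \<le> Df $$ (b,b)" using dle by auto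
    then have "d * d \<le> Df $$ (a,a) * Df $$ (b,b)" using pos unfolding d_def by (intro mult_mono) auto
    then have "(d^2)^2 \<le> (Df $$ (a,a) * Df $$ (b,b))^2"
      by (intro power_mono) (auto simp: power2_eq_square)
    moreover have "0 < d" using pos unfolding d_def .
    ultimately show "(H $$ (a,b))^2 / (Df $$ (a,a) * Df $$ (b,b))^2 \<le> (H $$ (a,b))^2 / (d^2)^2"
      using ab by (intro divide_left_mono) auto
  qed
  also have "\<dots> \<le> (frob_norm H)^2 / (d^2)^2"
    unfolding sum_divide_distrib[symmetric]
    using leading_block_sum_sq_le_frob_norm_sq[OF H k(2) k(2)] by (simp add: divide_right_mono)
  also have "frob_norm H = frob_norm (transpose_mat S * S - transpose_mat W * W)"
    unfolding H_def using S W_carrier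
    by (intro frob_norm_orthogonal_conj[OF Vf Vf_orth]) (auto simp: minus_carrier_mat)
  also have "(frob_norm (transpose_mat S * S - transpose_mat W * W))^2 / (d^2)^2
      = (frob_norm (transpose_mat S * S - transpose_mat W * W) / d^2)^2"
    by (simp add: power_divide)
  finally show ?thesis using frob_norm_nonneg pos unfolding d_def
    by (meson divide_nonneg_nonneg power2_le_imp_le zero_le_power2)
qed

end

context sorted_svd
begin

lemma gram_minus_one_bound:
  fixes A S E V U :: "real mat"
  assumes A: "A \<in> carrier_mat m n" and S: "S \<in> carrier_mat m p"
    and E: "E \<in> carrier_mat m k" "transpose_mat E * E = 1\<^sub>m k" and k: "1 \<le> k"
    and ray: "\<And>c. c \<in> carrier_vec k \<Longrightarrow>
       s * (c \<bullet> c) \<le> (transpose_mat A *\<^sub>v (E *\<^sub>v c)) \<bullet> (transpose_mat A *\<^sub>v (E *\<^sub>v c))"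
    and E1: "frob_norm (A * transpose_mat A - S * transpose_mat S) \<le> e"
    and E2: "frob_norm (transpose_mat S * S - transpose_mat W * W) \<le> e"
    and e: "2 * e < s"
    and V: "V = mat p k (\<lambda>(a,b). Vf $$ (a,b))"
    and U: "U = S * V * mat k k (\<lambda>(a,b). if a = b then 1 / Df $$ (a,a) else 0)"
  shows "0 < Df $$ (k-1,k-1)" "frob_norm (transpose_mat U * U - 1\<^sub>m k) \<le> e / (s - 2 * e)"
proof -
  have e0: "0 \<le> e" using E1 frob_norm_nonneg order_trans by blast
  have "(s - e) * (c \<bullet> c)
      \<le> (transpose_mat S *\<^sub>v (E *\<^sub>v c)) \<bullet> (transpose_mat S *\<^sub>v (E *\<^sub>v c))"
    if c: "c \<in> carrier_vec k" for c
  proof -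
    have Ec: "E *\<^sub>v c \<in> carrier_vec m" "(E *\<^sub>v c) \<bullet> (E *\<^sub>v c) = c \<bullet> c"
      using E c orthonormal_cols_preserve_scalar_prod[OF E c c] by auto
    show ?thesis
      using quadratic_form_perturbation[of "transpose_mat A" n m "transpose_mat S" p "E *\<^sub>v c"]
        A S Ec ray[OF c] mult_right_mono[OF E1 scalar_prod_self_nonneg[of c]]
      by (simp add: algebra_simps)
  qed
  from sigma_k_lower_bound[OF S E k _ this E2]
  have kp: "k \<le> p" and low: "s - 2 * e \<le> (Df $$ (k-1,k-1))^2" using e e0 by auto
  then have "0 < (Df $$ (k-1,k-1))^2" using e by linarith
  moreover have "0 \<le> Df $$ (k-1,k-1)" using Df_nonneg kp k by simp
  ultimately show pos: "0 < Df $$ (k-1,k-1)" by (simp add: less_le)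
  have "frob_norm (transpose_mat U * U - 1\<^sub>m k)
      \<le> frob_norm (transpose_mat S * S - transpose_mat W * W) / (Df $$ (k-1,k-1))^2"
    by (rule frob_norm_gram_minus_one_le[OF S k kp pos V U])
  also have "\<dots> \<le> e / (s - 2 * e)"
    using E2 low e e0 frob_norm_nonneg by (intro frac_le) auto
  finally show "frob_norm (transpose_mat U * U - 1\<^sub>m k) \<le> e / (s - 2 * e)" .
qed

end

section \<open>Sampling and the choice of parameters\<close>

lemma frob_norm_sample_cols_le:
  fixes A :: "real mat"
  assumes A: "A \<in> carrier_mat m n" and p: "0 < p" and F: "0 < frob_norm A"
  shows "frob_norm (sample_cols A p jx) \<le> frob_norm A"
proof -
  define S where "S = sample_cols A p jx"
  define cs where "cs j = (\<Sum>a<m. (A $$ (a,j))^2)" for j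
  have S: "S \<in> carrier_mat m p" unfolding S_def sample_cols_def using A by simp
  have cs: "0 \<le> cs j" for j unfolding cs_def by (rule sum_nonneg) simp
  have F2: "0 < (frob_norm A)^2" using F by simp
  text \<open>Column \<open>t\<close> has squared norm exactly \<open>\<parallel>A\<parallel>\<^sub>F\<^sup>2 / p\<close>, or \<open>0\<close> if the sampled column of \<open>A\<close> is zero
    (division by zero yields \<open>0\<close>).\<close>
  have col_bound: "col S t \<bullet> col S t \<le> (frob_norm A)^2 / real p" if t: "t < p" for t
  proof -
    have P: "real p * col_prob A (jx t) = real p * cs (jx t) / (frob_norm A)^2"
      unfolding col_prob_def cs_def using A by simp
    have "0 \<le> real p * col_prob A (jx t)" unfolding P using cs[of "jx t"] F2 by simp
    then have "col S t \<bullet> col S t = (\<Sum>a<m. (A $$ (a, jx t))^2 / (real p * col_prob A (jx t)))"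
      unfolding S_def sample_cols_def using A t by (simp add: scalar_prod_self power_divide)
    also have "\<dots> = cs (jx t) / (real p * col_prob A (jx t))"
      unfolding cs_def by (simp add: sum_divide_distrib)
    also have "\<dots> \<le> (frob_norm A)^2 / real p"
      unfolding P using cs[of "jx t"] F2 p by (cases "cs (jx t) = 0") (simp_all add: field_simps)
    finally show ?thesis .
  qed
  have "(frob_norm S)^2 \<le> (\<Sum>t<p. (frob_norm A)^2 / real p)"
    unfolding frob_norm_sq_cols[OF S] using col_bound by (intro sum_mono) auto
  also have "\<dots> = (frob_norm A)^2" using p by simp
  finally show ?thesis unfolding S_def using frob_norm_nonneg power2_le_imp_le by blast
qed

text \<open>Here \<open>a = \<parallel>A\<parallel>\<close>, \<open>s = \<sigma>\<^sub>m\<^sub>i\<^sub>n(A)\<close>, so that \<open>a / s = \<kappa>\<close>, and \<open>F = \<parallel>A\<parallel>\<^sub>F\<close>.\<close>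

lemma theta_bounds:
  fixes a s F omega theta :: real and k :: nat
  assumes pos: "0 < a" "0 < s" "0 < F" "0 \<le> omega"
    and theta: "theta \<le> omega * a^2 / ((4 * real k + 3 + 2 * omega) * (a / s)^2 * F^2)"
  shows "2 * (theta * F^2) < s^2" "theta * F^2 / (s^2 - 2 * (theta * F^2)) \<le> omega / (4 * real k + 3)"
proof -
  define D where "D = 4 * real k + 3 + 2 * omega"
  define x where "x = theta * F^2"
  have D: "0 < D" unfolding D_def using pos by simp
  have "omega * a^2 / (D * (a / s)^2 * F^2) = omega * s^2 / (D * F^2)"
    using pos by (simp add: power_divide)
  then have "x * D \<le> omega * s^2"
    using theta pos D unfolding D_def[symmetric] x_def by (simp add: pos_le_divide_eq ac_simps)
  then have key: "x * (4 * real k + 3) \<le> omega * (s^2 - 2 * x)"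
    unfolding D_def by (simp add: algebra_simps)
  have lt: "2 * x < s^2"
  proof (cases "x \<le> 0")
    case False
    then have "0 < omega * (s^2 - 2 * x)" using key by (smt (verit) of_nat_0_le_iff mult_pos_pos)
    then show ?thesis using pos by (simp add: zero_less_mult_iff)
  qed (use pos(2) zero_less_power[of s 2] in linarith)
  then show "2 * (theta * F^2) < s^2" unfolding x_def .
  show "theta * F^2 / (s^2 - 2 * (theta * F^2)) \<le> omega / (4 * real k + 3)"
    using key lt unfolding x_def[symmetric] by (simp add: divide_le_eq le_divide_eq mult.commute)
qed

theorem mainTheorem3:
  fixes A S W Uf Df Vf V Uhat :: "real mat"
    and m n r k p :: nat
    and eps delta omega theta beta :: real
    and jx ix :: "nat \<Rightarrow> nat"
  assumes A_dim: "A \<in> carrier_mat m n"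
    and A_nz: "A \<noteq> 0\<^sub>m m n"
    and r_def: "r = vec_space.rank m A"
    and k_ge: "1 \<le> k" and k_le: "k \<le> r"
    and eps: "0 < eps" "eps < 1"
    and delta: "0 < delta" "delta < 1"
    and omega_def: "omega = (spec_norm A)^2 * eps^2 /
          (196 * (frob_norm A * cond_num A + spec_norm A)^2)"
    and theta_pos: "0 < theta"
    and theta_le: "theta \<le> omega * (spec_norm A)^2 /
          ((4 * real k + 3 + 2 * omega) * (cond_num A)^2 * (frob_norm A)^2)"
    and p_def: "p = nat \<lceil>1 / (theta^2 * delta)\<rceil>"
    and js_range: "\<forall>t<p. jx t < n"
    and S_def: "S = sample_cols A p jx"
    and is_range: "\<forall>t<p. ix t < m"
    and W_def: "W = sample_rows S p ix"
    and E1: "frob_norm (A * transpose_mat A - S * transpose_mat S) \<le> theta * (frob_norm A)^2"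
    and E2: "frob_norm (transpose_mat S * S - transpose_mat W * W) \<le> theta * (frob_norm S)^2"
    (* a singular value decomposition W = Uf Df Vf^T, singular values in nonincreasing order *)
    and Uf_dim: "Uf \<in> carrier_mat p p" and Df_dim: "Df \<in> carrier_mat p p"
    and Vf_dim: "Vf \<in> carrier_mat p p"
    and Uf_orth: "transpose_mat Uf * Uf = 1\<^sub>m p"
    and Vf_orth: "transpose_mat Vf * Vf = 1\<^sub>m p"
    and Df_diag: "\<forall>a<p. \<forall>b<p. a \<noteq> b \<longrightarrow> Df $$ (a,b) = 0"
    and Df_nonneg: "\<forall>a<p. 0 \<le> Df $$ (a,a)"
    and Df_sorted: "\<forall>a b. a \<le> b \<longrightarrow> b < p \<longrightarrow> Df $$ (b,b) \<le> Df $$ (a,a)"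
    and W_svd: "W = Uf * Df * transpose_mat Vf"
    (* V = (v_1,...,v_k): right singular vectors for sigma_1 >= ... >= sigma_k *)
    and V_def: "V = mat p k (\<lambda>(a,b). Vf $$ (a,b))"
    and Uhat_def: "Uhat = S * V * mat k k (\<lambda>(a,b). if a = b then 1 / Df $$ (a,a) else 0)"
    and beta_def: "beta = omega / (4 * real k + 3)"
  shows "Df $$ (k - 1, k - 1) > 0
    \<and> spec_norm (transpose_mat Uhat * Uhat - 1\<^sub>m k) \<le> frob_norm (transpose_mat Uhat * Uhat - 1\<^sub>m k)
    \<and> frob_norm (transpose_mat Uhat * Uhat - 1\<^sub>m k) \<le> beta
    \<and> spec_norm (transpose_mat Uhat * Uhat) \<le> 1 + beta
    \<and> spec_norm Uhat \<le> sqrt (1 + beta)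
    \<and> frob_norm Uhat \<le> sqrt (real k * (1 + beta))"
proof -
  have k: "0 < k" using k_ge by simp
  note A = norms_pos_if_nonzero[OF A_dim A_nz]
  obtain E where E: "E \<in> carrier_mat m k" "transpose_mat E * E = 1\<^sub>m k" and sigma: "0 < sigma_min A"
    and ray: "\<And>c. c \<in> carrier_vec k \<Longrightarrow>
      (sigma_min A)^2 * (c \<bullet> c) \<le> (transpose_mat A *\<^sub>v (E *\<^sub>v c)) \<bullet> (transpose_mat A *\<^sub>v (E *\<^sub>v c))"
    using sigma_min_frame[OF A_dim k k_le[unfolded r_def]] by blast
  have p: "0 < p" using p_def theta_pos delta by simp
  have S: "S \<in> carrier_mat m p" unfolding S_def sample_cols_def using A_dim by simp
  have "(frob_norm S)^2 \<le> (frob_norm A)^2"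
    using frob_norm_sample_cols_le[OF A_dim p A(2)] frob_norm_nonneg unfolding S_def by (simp add: power_mono)
  then have E2': "frob_norm (transpose_mat S * S - transpose_mat W * W) \<le> theta * (frob_norm A)^2"
    using E2 theta_pos by (smt (verit) mult_left_mono)
  have "0 \<le> omega" unfolding omega_def by simp
  note theta = theta_bounds[OF A(1) sigma A(2) this theta_le[unfolded cond_num_def]]
  interpret sorted_svd W Uf Df Vf p by unfold_locales fact+
  note gram = gram_minus_one_bound[OF A_dim S E k_ge ray E1 E2' theta(1) V_def Uhat_def]
  have "S * V \<in> carrier_mat m k" unfolding V_def using S by simp
  then have U: "Uhat \<in> carrier_mat m k" unfolding Uhat_def by simp
  have beta: "frob_norm (transpose_mat Uhat * Uhat - 1\<^sub>m k) \<le> beta"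
    unfolding beta_def by (rule order_trans[OF gram(2) theta(2)])
  show ?thesis using gram(1) beta almost_orthonormal_cols_bounds[OF U k beta] by (intro conjI)
qed

end
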